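(* The Hermitian $\mathcal E$-lattices $L=\Lambda\oplus H$ and $E_8^{\mathcal E}\oplus E_8^{\mathcal E}\oplus E_8^{\mathcal E}\oplus H$ are isometric.
   Context: Let $\omega=e^{2\pi i/3}$, $\mathcal E=\mathbb Z[\omega]$, $\theta=\omega-\bar\omega=\sqrt{-3}$; Hermitian forms are conjugate-linear in the first variable. Identify $\mathcal E/\theta\mathcal E=\mathbb F_3$. The complex Leech lattice $\Lambda\subset\mathcal E^{12}$ is the set of vectors $(m+\theta c_i+3z_i)_{i=1}^{12}$ with $m\in\{0,1,-1\}$, $c=(c_i)\in\{0,\pm1\}^{12}$ reducing mod $\theta$ to a codeword of the ternary Golay code $\mathcal C_{12}$, $z_i\in\mathcal E$ and $\sum_i z_i\equiv m\pmod\theta$; here $\mathcal C_{12}\subset\mathbb F_3^{12}$ has generator matrix $[I_6\mid A]$ with rows of $A$ equal to $(0,1,1,1,1,1)$, $(-1,0,1,-1,-1,1)$, $(-1,1,0,1,-1,-1)$, $(-1,-1,1,0,1,-1)$, $(-1,-1,-1,1,0,1)$, $(-1,1,-1,-1,1,0)$. The form on $\Lambda$ is $\langle u,v\rangle=-\frac13\sum\bar u_iv_i$. $H$ is $\mathcal E^2$ with $\langle u,v\rangle=u^*\begin{pmatrix}0&\bar\theta\\ \theta&0\end{pmatrix}v$. $L=\Lambda\oplus H$ (orthogonal direct sum). $E_8^{\mathcal E}=\{v\in\mathcal E^4: v\bmod\theta\in\mathcal C_4\}$ with $\langle u,v\rangle=-\sum\bar u_iv_i$, where the tetracode $\mathcal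 C_4\subset\mathbb F_3^4$ is spanned by $(1,1,-1,0)$ and $(0,1,1,1)$. *)

theory Defs
  imports Complex_Main
begin

definition omega :: complex where
  "omega = cis (2 * pi / 3)"

definition theta :: complex where
  "theta = omega - cnj omega"

definition Eis :: "complex set" where
  "Eis = {of_int a + of_int b * omega | a b. True}"

definition cong_theta :: "complex \<Rightarrow> complex \<Rightarrow> bool" where
  "cong_theta x y \<longleftrightarrow> (\<exists>e\<in>Eis. x - y = theta * e)"

definition Evecs :: "nat \<Rightarrow> complex list set" where
  "Evecs n = {v. length v = n \<and> set v \<subseteq> Eis}"

definition vadd :: "complex list \<Rightarrow> complex list \<Rightarrow> complex list" where
  "vadd u v = map2 (+) u v"

definition vscale :: "complex \<Rightarrow> complex list \<Rightarrow> complex list" where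
  "vscale a v = map ((*) a) v"

definition std_herm :: "complex list \<Rightarrow> complex list \<Rightarrow> complex" where
  "std_herm u v = (\<Sum>i<length u. cnj (u ! i) * v ! i)"

section \<open>Codes over F_3 (entries represented by integers 0,1,2)\<close>

definition golayA :: "int list list" where
  "golayA = [[0,1,1,1,1,1], [-1,0,1,-1,-1,1], [-1,1,0,1,-1,-1],
             [-1,-1,1,0,1,-1], [-1,-1,-1,1,0,1], [-1,1,-1,-1,1,0]]"

text \<open>generator matrix [I_6 | A]\<close>
definition golayG :: "int list list" where
  "golayG = map (\<lambda>i. map (\<lambda>j. if j = i then 1 else 0) [0..<6] @ golayA ! i) [0..<6]"

definition golay12 :: "int list set" where
  "golay12 = {map (\<lambda>j. (\<Sum>i<6. a i * (golayG ! i ! j)) mod 3) [0..<12] | a. True}"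

definition tetracode :: "int list set" where
  "tetracode = {map (\<lambda>j. (a * ([1,1,-1,0] ! j) + b * ([0,1,1,1] ! j)) mod 3) [0..<4] | a b. True}"

definition reduces_to :: "complex list \<Rightarrow> int list \<Rightarrow> bool" where
  "reduces_to v w \<longleftrightarrow> length v = length w \<and>
     (\<forall>i<length v. cong_theta (v ! i) (of_int (w ! i)))"

definition Leech :: "complex list set" where
  "Leech = {v. length v = 12 \<and>
     (\<exists>(m::int) (c::int list) (z::complex list).
        m \<in> {0, 1, -1} \<and> length c = 12 \<and> set c \<subseteq> {0, 1, -1} \<and>
        (\<exists>w\<in>golay12. reduces_to (map of_int c) w) \<and>
        z \<in> Evecs 12 \<and> cong_theta (sum_list z) (of_int m) \<and>
        (\<forall>i<12. v ! i = of_int m + theta * of_int (c ! i) + 3 * z ! i))}"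

definition Leech_form :: "complex list \<Rightarrow> complex list \<Rightarrow> complex" where
  "Leech_form u v = - (1/3) * std_herm u v"

definition Hplane :: "complex list set" where
  "Hplane = Evecs 2"

definition H_form :: "complex list \<Rightarrow> complex list \<Rightarrow> complex" where
  "H_form u v = cnj (u ! 0) * cnj theta * v ! 1 + cnj (u ! 1) * theta * v ! 0"

definition E8E :: "complex list set" where
  "E8E = {v \<in> Evecs 4. \<exists>w\<in>tetracode. reduces_to v w}"

definition E8_form :: "complex list \<Rightarrow> complex list \<Rightarrow> complex" where
  "E8_form u v = - std_herm u v"

definition Lbig :: "complex list set" where
  "Lbig = {u @ h | u h. u \<in> Leech \<and> h \<in> Hplane}"

definition Lbig_form :: "complex list \<Rightarrow> complex list \<Rightarrow> complex" where
  "Lbig_form x y = Leech_form (take 12 x) (take 12 y) + H_form (drop 12 x) (drop 12 y)"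

definition E8cubeH :: "complex list set" where
  "E8cubeH = {a @ b @ c @ h | a b c h. a \<in> E8E \<and> b \<in> E8E \<and> c \<in> E8E \<and> h \<in> Hplane}"

definition E8cubeH_form :: "complex list \<Rightarrow> complex list \<Rightarrow> complex" where
  "E8cubeH_form x y =
     E8_form (take 4 x) (take 4 y)
   + E8_form (take 4 (drop 4 x)) (take 4 (drop 4 y))
   + E8_form (take 4 (drop 8 x)) (take 4 (drop 8 y))
   + H_form (drop 12 x) (drop 12 y)"

definition isometric ::
  "complex list set \<Rightarrow> (complex list \<Rightarrow> complex list \<Rightarrow> complex) \<Rightarrow>
   complex list set \<Rightarrow> (complex list \<Rightarrow> complex list \<Rightarrow> complex) \<Rightarrow> bool" where
  "isometric L fL M fM \<longleftrightarrow> (\<exists>f. bij_betw f L M \<and>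
     (\<forall>u\<in>L. \<forall>v\<in>L. \<forall>a\<in>Eis. \<forall>b\<in>Eis.
        f (vadd (vscale a u) (vscale b v)) = vadd (vscale a (f u)) (vscale b (f v))) \<and>
     (\<forall>u\<in>L. \<forall>v\<in>L. fM (f u) (f v) = fL u v))"

end

theory Submission
  imports Defs "HOL-Library.Product_Plus"
begin

text \<open>The isometry is \<open>v \<mapsto> v F / 9\<close> for an explicit \<open>14 \<times> 14\<close> matrix \<open>F\<close> over \<open>\<int>[\<omega>]\<close>,
  with inverse \<open>w \<mapsto> w G / 3\<close> where \<open>F G = G F = 27 I\<close>. Both lattices are \<open>\<E>\<close>-submodules of
  \<open>\<E>\<^sup>1\<^sup>4\<close> spanned by explicit generators, read off from the coordinates \<open>v = m \<one> + \<theta> c + 3 z\<close> of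
  Leech vectors and \<open>v = c + \<theta> e\<close> of \<open>E\<^sub>8\<close> vectors. So the map sends \<open>L\<close> into
  \<open>E\<^sub>8\<^sup>3 \<oplus> H\<close> (and \<open>G\<close> maps back) as soon as this holds on generators, and it is an
  isometry as soon as the Gram matrix of the rows of \<open>F\<close> for the form of \<open>E\<^sub>8\<^sup>3 \<oplus> H\<close> is
  \<open>81\<close> times that of the standard basis for the form of \<open>L\<close>. These finitely many identities in
  \<open>\<int>[\<omega>]\<close> are checked by evaluation on integer coordinate pairs. The one structural input is
  that the Leech lattice is an \<open>\<E>\<close>-module: closure under \<open>\<omega>\<close> rests on \<open>\<omega> \<equiv> 1 (mod \<theta>)\<close> and
  on the all-ones word lying in the Golay code.\<close>

section \<open>Eisenstein integers\<close>

lemma omega_eq: "omega = Complex (-1/2) (sqrt 3 / 2)"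
  unfolding omega_def cis.ctr using cos_120 sin_120 by simp

lemma omega_squared: "omega * omega = -1 - omega"
  by (simp add: omega_eq complex_eq_iff algebra_simps)

lemma cnj_omega: "cnj omega = -1 - omega"
  by (simp add: omega_eq complex_eq_iff)

lemma theta_eq: "theta = 1 + 2 * omega"
  unfolding theta_def cnj_omega by simp

lemma theta_squared: "theta * theta = -3"
proof -
  have "theta * theta = 1 + 4 * omega + 4 * (omega * omega)"
    by (simp add: theta_eq algebra_simps)
  then show ?thesis
    by (simp add: omega_squared)
qed

text \<open>Computations in \<open>\<E>\<close> are carried out on coordinate pairs \<open>(a, b) \<mapsto> a + b \<omega>\<close>;
  addition is the componentwise one of \<open>HOL-Library.Product_Plus\<close>.\<close>

type_synonym zw = "int \<times> int"

definition of_zw :: "zw \<Rightarrow> complex" where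
  "of_zw p = of_int (fst p) + of_int (snd p) * omega"

fun zw_mult :: "zw \<Rightarrow> zw \<Rightarrow> zw" where
  "zw_mult (a, b) (c, d) = (a * c - b * d, a * d + b * c - b * d)"

fun zw_cnj :: "zw \<Rightarrow> zw" where
  "zw_cnj (a, b) = (a - b, - b)"

lemma of_zw_add: "of_zw (p + q) = of_zw p + of_zw q"
  by (simp add: of_zw_def algebra_simps)

lemma of_zw_diff: "of_zw (p - q) = of_zw p - of_zw q"
  by (simp add: of_zw_def algebra_simps)

lemma of_zw_zero [simp]: "of_zw 0 = 0"
  by (simp add: of_zw_def)

lemma of_zw_mult: "of_zw (zw_mult p q) = of_zw p * of_zw q"
proof (cases p; cases q)
  fix a b c d assume "p = (a, b)" "q = (c, d)"
  moreover have "of_zw (a, b) * of_zw (c, d)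
      = of_int (a * c) + of_int (a * d + b * c) * omega + of_int (b * d) * (omega * omega)"
    by (simp add: of_zw_def algebra_simps)
  ultimately show ?thesis
    by (simp add: omega_squared of_zw_def algebra_simps)
qed

lemma of_zw_cnj: "of_zw (zw_cnj p) = cnj (of_zw p)"
  by (cases p) (simp add: of_zw_def cnj_omega algebra_simps)

lemma of_zw_sum: "of_zw (sum f A) = (\<Sum>a\<in>A. of_zw (f a))"
  by (induction A rule: infinite_finite_induct) (simp_all add: of_zw_add)

lemma of_zw_int [simp]: "of_zw (k, 0) = of_int k"
  by (simp add: of_zw_def)

lemma of_zw_theta: "of_zw (1, 2) = theta"
  by (simp add: of_zw_def theta_eq)

lemma of_zw_inject: "of_zw p = of_zw q \<longleftrightarrow> p = q"
proof
  assume eq: "of_zw p = of_zw q"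
  from arg_cong[OF eq, of Im] have "snd p = snd q"
    by (simp add: of_zw_def omega_eq)
  moreover from arg_cong[OF eq, of Re] have "fst p - snd p / 2 = (fst q - snd q / 2 :: real)"
    by (simp add: of_zw_def omega_eq)
  ultimately show "p = q"
    by (simp add: prod_eq_iff)
qed simp

lemma Eis_eq_range: "Eis = range of_zw"
proof (intro set_eqI iffI)
  fix x assume "x \<in> Eis"
  then obtain a b where "x = of_int a + of_int b * omega"
    by (auto simp: Eis_def)
  then have "x = of_zw (a, b)"
    by (simp add: of_zw_def)
  then show "x \<in> range of_zw"
    by blast
qed (auto simp: Eis_def of_zw_def)

lemma of_zw_in_Eis [simp]: "of_zw p \<in> Eis"
  by (simp add: Eis_eq_range)

lemma EisE:
  assumes "x \<in> Eis"
  obtains p where "x = of_zw p"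
  using assms by (auto simp: Eis_eq_range)

lemma Eis_add [simp]: "x \<in> Eis \<Longrightarrow> y \<in> Eis \<Longrightarrow> x + y \<in> Eis"
  by (elim EisE) (simp flip: of_zw_add)

lemma Eis_diff [simp]: "x \<in> Eis \<Longrightarrow> y \<in> Eis \<Longrightarrow> x - y \<in> Eis"
  by (elim EisE) (simp flip: of_zw_diff)

lemma Eis_mult [simp]: "x \<in> Eis \<Longrightarrow> y \<in> Eis \<Longrightarrow> x * y \<in> Eis"
  by (elim EisE) (simp flip: of_zw_mult)

lemma Eis_uminus [simp]: "x \<in> Eis \<Longrightarrow> - x \<in> Eis"
  by (metis Eis_diff diff_0 of_zw_in_Eis of_zw_zero)

lemma Eis_of_int [simp]: "of_int k \<in> Eis"
  using of_zw_in_Eis[of "(k, 0)"] by simp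

lemma Eis_numeral [simp]: "numeral n \<in> Eis"
  using Eis_of_int[of "numeral n"] by simp

lemma Eis_0 [simp]: "0 \<in> Eis" and Eis_1 [simp]: "1 \<in> Eis"
  using Eis_of_int[of 0] Eis_of_int[of 1] by simp_all

lemma Eis_omega [simp]: "omega \<in> Eis"
  using of_zw_in_Eis[of "(0, 1)"] by (simp add: of_zw_def)

lemma Eis_theta [simp]: "theta \<in> Eis"
  by (simp add: theta_eq)

lemma Eis_sum [simp]: "(\<And>i. i \<in> A \<Longrightarrow> f i \<in> Eis) \<Longrightarrow> sum f A \<in> Eis"
  by (induction A rule: infinite_finite_induct) auto

lemma Evecs_iff_nth: "v \<in> Evecs n \<longleftrightarrow> length v = n \<and> (\<forall>i<n. v ! i \<in> Eis)"
  by (auto simp: Evecs_def subset_eq all_set_conv_all_nth)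

lemma map_of_zw_in_Evecs: "length r = n \<Longrightarrow> map of_zw r \<in> Evecs n"
  by (auto simp: Evecs_def)

lemma theta_mult_of_zw: "theta * of_zw (p, q) = of_zw (p - 2 * q, 2 * p - q)"
  by (simp add: of_zw_theta[symmetric] of_zw_mult[symmetric])

lemma cong_theta_of_zw:
  "cong_theta (of_zw p) (of_zw q) \<longleftrightarrow> (3::int) dvd (fst p + snd p - fst q - snd q)"
proof
  assume "cong_theta (of_zw p) (of_zw q)"
  then obtain e where "of_zw p - of_zw q = theta * of_zw e"
    unfolding cong_theta_def by (auto elim!: EisE)
  then have "p - q = (fst e - 2 * snd e, 2 * fst e - snd e)"
    by (cases e) (simp add: theta_mult_of_zw of_zw_inject flip: of_zw_diff)
  then have "fst p + snd p - fst q - snd q = 3 * (fst e - snd e)"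
    by (simp add: prod_eq_iff)
  then show "(3::int) dvd (fst p + snd p - fst q - snd q)"
    by simp
next
  assume "(3::int) dvd (fst p + snd p - fst q - snd q)"
  then obtain t where t: "fst p + snd p - fst q - snd q = 3 * t"
    by blast
  define e2 where "e2 = snd p - snd q - 2 * t"
  define e1 where "e1 = fst p - fst q + 2 * e2"
  have "p - q = (e1 - 2 * e2, 2 * e1 - e2)"
    using t by (simp add: prod_eq_iff e1_def e2_def algebra_simps)
  then have "of_zw p - of_zw q = theta * of_zw (e1, e2)"
    by (simp add: theta_mult_of_zw flip: of_zw_diff)
  then show "cong_theta (of_zw p) (of_zw q)"
    unfolding cong_theta_def using of_zw_in_Eis by blast
qed

lemma cong_theta_of_int: "cong_theta (of_int x) (of_int y) \<longleftrightarrow> (3::int) dvd (x - y)"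
  using cong_theta_of_zw[of "(x, 0)" "(y, 0)"] by simp

lemma cong_theta_refl: "cong_theta x x"
  unfolding cong_theta_def by (auto intro!: bexI[of _ 0])

lemma cong_theta_sym: "cong_theta x y \<Longrightarrow> cong_theta y x"
  unfolding cong_theta_def by (metis Eis_uminus minus_diff_eq mult_minus_right)

lemma cong_theta_trans: "cong_theta x y \<Longrightarrow> cong_theta y z \<Longrightarrow> cong_theta x z"
  unfolding cong_theta_def
proof (elim bexE)
  fix e1 e2 assume "e1 \<in> Eis" "x - y = theta * e1" "e2 \<in> Eis" "y - z = theta * e2"
  then show "\<exists>e\<in>Eis. x - z = theta * e"
    by (intro bexI[of _ "e1 + e2"]) (auto simp: algebra_simps)
qed

lemma cong_theta_add:
  "cong_theta x x' \<Longrightarrow> cong_theta y y' \<Longrightarrow> cong_theta (x + y) (x' + y')"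
  unfolding cong_theta_def
proof (elim bexE)
  fix e1 e2 assume "e1 \<in> Eis" "x - x' = theta * e1" "e2 \<in> Eis" "y - y' = theta * e2"
  then show "\<exists>e\<in>Eis. x + y - (x' + y') = theta * e"
    by (intro bexI[of _ "e1 + e2"]) (auto simp: algebra_simps)
qed

lemma cong_theta_mult:
  assumes "x \<in> Eis" "y' \<in> Eis" "cong_theta x x'" "cong_theta y y'"
  shows "cong_theta (x * y) (x' * y')"
proof -
  obtain e1 e2 where e: "e1 \<in> Eis" "x - x' = theta * e1" "e2 \<in> Eis" "y - y' = theta * e2"
    using assms(3,4) unfolding cong_theta_def by blast
  have "x * y - x' * y' = x * (y - y') + (x - x') * y'"
    by (simp add: algebra_simps)
  also have "\<dots> = theta * (x * e2 + e1 * y')"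
    unfolding e by (simp add: algebra_simps)
  finally show ?thesis
    unfolding cong_theta_def using assms e by auto
qed

lemma Eis_cong_theta_int:
  assumes "x \<in> Eis"
  obtains r :: int where "cong_theta x (of_int r)"
proof -
  obtain p where "x = of_zw p"
    using assms by (elim EisE)
  then have "cong_theta x (of_int (fst p + snd p))"
    using cong_theta_of_zw[of p "(fst p + snd p, 0)"] by simp
  then show thesis ..
qed

definition vecmat :: "complex list \<Rightarrow> complex list list \<Rightarrow> complex list" where
  "vecmat v M = map (\<lambda>j. \<Sum>k<length M. v ! k * M ! k ! j) [0..<length (hd M)]"

definition scalar_mat :: "nat \<Rightarrow> 'a::zero \<Rightarrow> 'a list list" where
  "scalar_mat n c = map (\<lambda>i. map (\<lambda>j. if i = j then c else 0) [0..<n]) [0..<n]"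

lemma length_vecmat [simp]: "length (vecmat v M) = length (hd M)"
  by (simp add: vecmat_def)

lemma nth_vecmat: "j < length (hd M) \<Longrightarrow> vecmat v M ! j = (\<Sum>k<length M. v ! k * M ! k ! j)"
  by (simp add: vecmat_def)

lemma vecmat_vecmat:
  assumes "A \<noteq> []" and rows: "\<forall>r\<in>set A. length r = length B"
  shows "vecmat (vecmat v A) B = vecmat v (map (\<lambda>r. vecmat r B) A)"
proof (rule nth_equalityI)
  show "length (vecmat (vecmat v A) B) = length (vecmat v (map (\<lambda>r. vecmat r B) A))"
    using \<open>A \<noteq> []\<close> by (simp add: hd_map)
  fix j assume "j < length (vecmat (vecmat v A) B)"
  then have j: "j < length (hd B)"
    by simp
  have hdA: "length (hd A) = length B"
    using rows \<open>A \<noteq> []\<close> by simp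
  have "vecmat (vecmat v A) B ! j = (\<Sum>m<length B. (\<Sum>k<length A. v ! k * A ! k ! m) * B ! m ! j)"
    using j hdA by (simp add: nth_vecmat)
  also have "\<dots> = (\<Sum>k<length A. v ! k * (\<Sum>m<length B. A ! k ! m * B ! m ! j))"
    by (simp add: sum_distrib_left sum_distrib_right mult.assoc sum.swap[of _ "{..<length B}"])
  also have "\<dots> = vecmat v (map (\<lambda>r. vecmat r B) A) ! j"
    using j rows \<open>A \<noteq> []\<close> by (simp add: nth_vecmat hd_map)
  finally show "vecmat (vecmat v A) B ! j = vecmat v (map (\<lambda>r. vecmat r B) A) ! j" .
qed

lemma vecmat_scalar_mat:
  assumes "length v = n" "0 < n"
  shows "vecmat v (scalar_mat n c) = vscale c v"
proof (rule nth_equalityI)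
  fix j assume "j < length (vecmat v (scalar_mat n c))"
  then have j: "j < n"
    using assms by (simp add: scalar_mat_def hd_map)
  have "vecmat v (scalar_mat n c) ! j = (\<Sum>k<n. v ! k * (if k = j then c else 0))"
    using j assms by (simp add: nth_vecmat scalar_mat_def hd_map)
  also have "\<dots> = (\<Sum>k<n. if k = j then c * v ! k else 0)"
    by (rule sum.cong) auto
  also have "\<dots> = vscale c v ! j"
    using j assms by (simp add: vscale_def)
  finally show "vecmat v (scalar_mat n c) ! j = vscale c v ! j" .
qed (use assms in \<open>simp add: scalar_mat_def hd_map vscale_def\<close>)

lemma vecmat_linear:
  assumes "length u = length M" "length v = length M"
  shows "vecmat (vadd (vscale a u) (vscale b v)) M = vadd (vscale a (vecmat u M)) (vscale b (vecmat v M))"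
  using assms
  by (intro nth_equalityI)
     (auto simp: nth_vecmat vadd_def vscale_def sum.distrib sum_distrib_left algebra_simps)

lemma vecmat_vscale: "length x = length M \<Longrightarrow> vecmat (vscale c x) M = vscale c (vecmat x M)"
  by (intro nth_equalityI) (simp_all add: nth_vecmat vscale_def sum_distrib_left mult.assoc)

lemma vecmat_map_vscale:
  assumes "M \<noteq> []" "\<forall>r\<in>set M. length r = n"
  shows "vecmat x (map (vscale c) M) = vscale c (vecmat x M)"
  using assms
  by (intro nth_equalityI) (auto simp: nth_vecmat vscale_def hd_map sum_distrib_left mult_ac)

definition lin_map :: "complex \<Rightarrow> complex list list \<Rightarrow> complex list \<Rightarrow> complex list" where
  "lin_map c M v = vscale c (vecmat v M)"

lemma lin_map_linear:
  assumes "length u = length M" "length v = length M"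
  shows "lin_map c M (vadd (vscale a u) (vscale b v)) = vadd (vscale a (lin_map c M u)) (vscale b (lin_map c M v))"
  using assms unfolding lin_map_def vecmat_linear[OF assms]
  by (intro nth_equalityI) (simp_all add: vadd_def vscale_def algebra_simps)

lemma lin_map_lin_map:
  assumes "A \<noteq> []" "\<forall>r\<in>set A. length r = length B"
  shows "lin_map d B (lin_map c A v) = lin_map (c * d) (map (\<lambda>r. vecmat r B) A) v"
proof -
  have "length (vecmat v A) = length B"
    using assms by simp
  then show ?thesis
    using assms
    by (simp add: lin_map_def vecmat_vscale vecmat_vecmat) (simp add: vscale_def mult.assoc)
qed

lemma lin_map_scalar_mat: "length v = n \<Longrightarrow> 0 < n \<Longrightarrow> lin_map c (scalar_mat n d) v = vscale (c * d) v"
  by (simp add: lin_map_def vecmat_scalar_mat) (simp add: vscale_def mult.assoc)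

lemma lin_map_vecmat:
  assumes "M \<noteq> []" "\<forall>r\<in>set M. length r = length F" "F \<noteq> []"
  shows "lin_map c F (vecmat x M) = vecmat x (map (lin_map c F) M)"
proof -
  have "lin_map c F (vecmat x M) = vscale c (vecmat x (map (\<lambda>r. vecmat r F) M))"
    using assms by (simp add: lin_map_def vecmat_vecmat)
  also have "\<dots> = vecmat x (map (vscale c) (map (\<lambda>r. vecmat r F) M))"
    using assms(1) by (intro vecmat_map_vscale[symmetric, where n = "length (hd F)"]) auto
  also have "map (vscale c) (map (\<lambda>r. vecmat r F) M) = map (lin_map c F) M"
    by (simp add: lin_map_def o_def)
  finally show ?thesis .
qed

definition zw_vecmat :: "zw list \<Rightarrow> zw list list \<Rightarrow> zw list" where
  "zw_vecmat v M = map (\<lambda>j. \<Sum>k\<leftarrow>[0..<length M]. zw_mult (v ! k) (M ! k ! j)) [0..<length (hd M)]"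

abbreviation mat_of_zw :: "zw list list \<Rightarrow> complex list list" where
  "mat_of_zw \<equiv> map (map of_zw)"

lemma sum_list_map_upt: "(\<Sum>k\<leftarrow>[0..<n]. f k) = (\<Sum>k<n. f k)"
  by (simp add: sum_set_upt_conv_sum_list_nat[symmetric] atLeast0LessThan)

lemma map_of_zw_zw_vecmat:
  assumes "length v = length M" "M \<noteq> []" "\<forall>r\<in>set M. length r = n"
  shows "map of_zw (zw_vecmat v M) = vecmat (map of_zw v) (mat_of_zw M)"
proof (rule nth_equalityI)
  have hd: "length (hd M) = n"
    using assms by simp
  then show "length (map of_zw (zw_vecmat v M)) = length (vecmat (map of_zw v) (mat_of_zw M))"
    using assms by (simp add: zw_vecmat_def hd_map)
  fix j assume "j < length (map of_zw (zw_vecmat v M))"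
  then have j: "j < n"
    using hd by (simp add: zw_vecmat_def)
  have "map of_zw (zw_vecmat v M) ! j = (\<Sum>k<length M. of_zw (v ! k) * of_zw (M ! k ! j))"
    using j hd by (simp add: zw_vecmat_def sum_list_map_upt of_zw_sum of_zw_mult)
  also have "\<dots> = vecmat (map of_zw v) (mat_of_zw M) ! j"
    using j hd assms by (auto simp: nth_vecmat hd_map intro!: sum.cong)
  finally show "map of_zw (zw_vecmat v M) ! j = vecmat (map of_zw v) (mat_of_zw M) ! j" .
qed

lemma mat_of_zw_scalar_mat: "mat_of_zw (scalar_mat n (k, 0)) = scalar_mat n (of_int k)"
  by (simp add: scalar_mat_def)

lemma mat_of_zw_matmul:
  assumes "B \<noteq> []" "\<forall>r\<in>set A. length r = length B" "\<forall>r\<in>set B. length r = n"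
  shows "map (\<lambda>r. vecmat r (mat_of_zw B)) (mat_of_zw A) = mat_of_zw (map (\<lambda>r. zw_vecmat r B) A)"
proof -
  have "vecmat (map of_zw r) (mat_of_zw B) = map of_zw (zw_vecmat r B)" if "r \<in> set A" for r
    using map_of_zw_zw_vecmat[of r B n] assms that by simp
  then show ?thesis
    by simp
qed

lemma lin_map_mat_of_zw_inverse:
  assumes "map (\<lambda>r. zw_vecmat r B) A = scalar_mat n (k, 0)" "c * d * of_int k = 1"
    and "A \<noteq> []" "B \<noteq> []" "\<forall>r\<in>set A. length r = length B" "\<forall>r\<in>set B. length r = n"
    and "length v = n" "0 < n"
  shows "lin_map d (mat_of_zw B) (lin_map c (mat_of_zw A) v) = v"
proof -
  have "lin_map d (mat_of_zw B) (lin_map c (mat_of_zw A) v)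
      = lin_map (c * d) (map (\<lambda>r. vecmat r (mat_of_zw B)) (mat_of_zw A)) v"
    using assms by (intro lin_map_lin_map) auto
  also have "map (\<lambda>r. vecmat r (mat_of_zw B)) (mat_of_zw A) = mat_of_zw (map (\<lambda>r. zw_vecmat r B) A)"
    using assms(4-6) by (rule mat_of_zw_matmul)
  also have "\<dots> = scalar_mat n (of_int k)"
    by (simp add: assms(1) mat_of_zw_scalar_mat)
  finally show ?thesis
    using assms by (simp add: lin_map_scalar_mat vscale_def map_idI)
qed

definition zw_div :: "int \<Rightarrow> zw \<Rightarrow> zw" where
  "zw_div k p = (fst p div k, snd p div k)"

lemma vscale_map_of_zw_div:
  assumes "k \<noteq> 0" "list_all (\<lambda>p. k dvd fst p \<and> k dvd snd p) w"
  shows "vscale (1 / of_int k) (map of_zw w) = map of_zw (map (zw_div k) w)"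
proof -
  have "of_zw p / of_int k = of_zw (zw_div k p)" if "k dvd fst p" "k dvd snd p" for p
    using that assms(1) by (auto simp: of_zw_def zw_div_def field_simps elim!: dvdE)
  then show ?thesis
    using assms(2) by (auto simp: vscale_def list_all_iff intro!: map_cong)
qed

lemma lin_map_of_zw_div:
  assumes "k \<noteq> 0" "M \<noteq> []" "length r = length M" "\<forall>s\<in>set M. length s = n"
    and "list_all (\<lambda>p. k dvd fst p \<and> k dvd snd p) (zw_vecmat r M)"
  shows "lin_map (1 / of_int k) (mat_of_zw M) (map of_zw r) = map of_zw (map (zw_div k) (zw_vecmat r M))"
  using assms map_of_zw_zw_vecmat[of r M n, symmetric]
  by (simp add: lin_map_def vscale_map_of_zw_div)

definition Eis_submodule :: "nat \<Rightarrow> complex list set \<Rightarrow> bool" where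
  "Eis_submodule n S \<longleftrightarrow> S \<subseteq> Evecs n \<and> replicate n 0 \<in> S \<and>
     (\<forall>u\<in>S. \<forall>v\<in>S. vadd u v \<in> S) \<and> (\<forall>a\<in>Eis. \<forall>u\<in>S. vscale a u \<in> S)"

lemma vecmat_in_submodule:
  assumes S: "Eis_submodule n S" and M: "M \<noteq> []" "set M \<subseteq> S"
    and v: "length v = length M" "set v \<subseteq> Eis"
  shows "vecmat v M \<in> S"
proof -
  have rows: "length r = n" if "r \<in> set M" for r
    using that M S by (auto simp: Eis_submodule_def Evecs_def)
  define ps where "ps k = map (\<lambda>j. \<Sum>i<k. v ! i * M ! i ! j) [0..<n]" for k
  have "ps k \<in> S" if "k \<le> length M" for k
    using that
  proof (induction k)
    case 0
    then show ?case
      using S by (simp add: ps_def Eis_submodule_def map_replicate_const)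
  next
    case (Suc k)
    have "ps (Suc k) = vadd (ps k) (vscale (v ! k) (M ! k))"
      using Suc.prems rows[of "M ! k"] by (intro nth_equalityI) (auto simp: ps_def vadd_def vscale_def)
    moreover have "v ! k \<in> Eis" "M ! k \<in> S"
      using Suc.prems v M by auto
    ultimately show ?case
      using Suc S unfolding Eis_submodule_def by simp
  qed
  moreover have "vecmat v M = ps (length M)"
    using M rows by (simp add: vecmat_def ps_def)
  ultimately show ?thesis
    by simp
qed

lemma Eis_submodule_Evecs: "Eis_submodule n (Evecs n)"
  by (simp add: Eis_submodule_def Evecs_iff_nth vadd_def vscale_def)

lemma vadd_append: "length u = length u' \<Longrightarrow> vadd (u @ h) (u' @ h') = vadd u u' @ vadd h h'"
  by (simp add: vadd_def)

lemma vscale_append: "vscale a (u @ h) = vscale a u @ vscale a h"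
  by (simp add: vscale_def)

lemma Eis_submodule_append:
  assumes A: "Eis_submodule m A" and B: "Eis_submodule n B"
  shows "Eis_submodule (m + n) {u @ h | u h. u \<in> A \<and> h \<in> B}"
proof -
  let ?S = "{u @ h | u h. u \<in> A \<and> h \<in> B}"
  have len: "length u = m" if "u \<in> A" for u
    using that A by (auto simp: Eis_submodule_def Evecs_def)
  show ?thesis
    unfolding Eis_submodule_def
  proof (intro conjI ballI subsetI)
    fix x assume "x \<in> ?S"
    then obtain u h where "x = u @ h" "u \<in> A" "h \<in> B"
      by blast
    moreover have "u \<in> Evecs m" "h \<in> Evecs n"
      using A B \<open>u \<in> A\<close> \<open>h \<in> B\<close> unfolding Eis_submodule_def by blast+
    ultimately show "x \<in> Evecs (m + n)"
      by (simp add: Evecs_def)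
  next
    have "replicate m 0 @ replicate n 0 \<in> ?S"
      using A B unfolding Eis_submodule_def by blast
    then show "replicate (m + n) 0 \<in> ?S"
      by (simp add: replicate_add)
  next
    fix x y assume "x \<in> ?S" "y \<in> ?S"
    then obtain u h u' h' where xy: "x = u @ h" "y = u' @ h'" and "u \<in> A" "h \<in> B" "u' \<in> A" "h' \<in> B"
      by blast
    moreover have "vadd u u' \<in> A" "vadd h h' \<in> B"
      using A B \<open>u \<in> A\<close> \<open>h \<in> B\<close> \<open>u' \<in> A\<close> \<open>h' \<in> B\<close> unfolding Eis_submodule_def by blast+
    ultimately show "vadd x y \<in> ?S"
      using len by (auto simp: vadd_append)
  next
    fix a x assume "a \<in> Eis" "x \<in> ?S"
    then obtain u h where "x = u @ h" "u \<in> A" "h \<in> B"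
      by blast
    moreover have "vscale a u \<in> A" "vscale a h \<in> B"
      using A B \<open>a \<in> Eis\<close> \<open>u \<in> A\<close> \<open>h \<in> B\<close> unfolding Eis_submodule_def by blast+
    ultimately show "vscale a x \<in> ?S"
      by (auto simp: vscale_append)
  qed
qed

section \<open>The complex Leech lattice\<close>

definition golay_word :: "(nat \<Rightarrow> int) \<Rightarrow> nat \<Rightarrow> int" where
  "golay_word a j = (\<Sum>i<6. a i * golayG ! i ! j)"

lemma golayG_eq:
  "golayG = [[1,0,0,0,0,0, 0,1,1,1,1,1], [0,1,0,0,0,0, -1,0,1,-1,-1,1], [0,0,1,0,0,0, -1,1,0,1,-1,-1],
             [0,0,0,1,0,0, -1,-1,1,0,1,-1], [0,0,0,0,1,0, -1,-1,-1,1,0,1], [0,0,0,0,0,1, -1,1,-1,-1,1,0]]"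
  by code_simp

lemma less_6_cases: "(i::nat) < 6 \<longleftrightarrow> i = 0 \<or> i = 1 \<or> i = 2 \<or> i = 3 \<or> i = 4 \<or> i = 5"
  by presburger

lemma less_12_cases:
  "(j::nat) < 12 \<longleftrightarrow> j = 0 \<or> j = 1 \<or> j = 2 \<or> j = 3 \<or> j = 4 \<or> j = 5 \<or> j = 6 \<or> j = 7 \<or> j = 8 \<or> j = 9 \<or> j = 10 \<or> j = 11"
  by presburger

lemma less_14_cases:
  "(j::nat) < 14 \<longleftrightarrow> j = 0 \<or> j = 1 \<or> j = 2 \<or> j = 3 \<or> j = 4 \<or> j = 5 \<or> j = 6 \<or> j = 7 \<or> j = 8 \<or> j = 9 \<or> j = 10 \<or> j = 11 \<or> j = 12 \<or> j = 13"
  by presburger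

lemma sum_lessThan_6: "(\<Sum>i<(6::nat). f i) = f 0 + f 1 + f 2 + f 3 + f 4 + (f 5 :: 'a::comm_monoid_add)"
  by (simp add: eval_nat_numeral ac_simps)

lemma sum_lessThan_12:
  "(\<Sum>i<(12::nat). f i) = f 0 + f 1 + f 2 + f 3 + f 4 + f 5 + f 6 + f 7 + f 8 + f 9 + f 10 + (f 11 :: 'a::comm_monoid_add)"
  by (simp add: eval_nat_numeral ac_simps)

lemma sum_lessThan_14: "(\<Sum>i<(14::nat). f i) = (\<Sum>i<12. f i) + f 12 + (f 13 :: 'a::comm_monoid_add)"
proof -
  have "{..<14::nat} = insert 13 (insert 12 {..<12})"
    by auto
  then show ?thesis
    by (simp add: add_ac)
qed

lemma golayG_column_sum: "j < 12 \<Longrightarrow> (\<Sum>i<6. golayG ! i ! j) = 1 - (if j = 6 then 6 else 0)"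
  unfolding less_12_cases by (auto simp: sum_lessThan_6 golayG_eq)

lemma golayG_row_sum: "i < 6 \<Longrightarrow> (\<Sum>j<12. golayG ! i ! j) = (if i = 0 then 6 else 0)"
  unfolding less_6_cases by (auto simp: sum_lessThan_12 golayG_eq)

lemma golay_word_add: "golay_word (\<lambda>i. a i + b i) j = golay_word a j + golay_word b j"
  by (simp add: golay_word_def sum.distrib algebra_simps)

lemma golay_word_mult: "golay_word (\<lambda>i. n * a i) j = n * golay_word a j"
  by (simp add: golay_word_def sum_distrib_left mult_ac)

lemma golay_word_shift:
  "j < 12 \<Longrightarrow> golay_word (\<lambda>i. a i - k) j = golay_word a j - k + (if j = 6 then 6 * k else 0)"
  by (simp add: golay_word_def sum_subtractf algebra_simps sum_distrib_left[symmetric] golayG_column_sum)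

lemma sum_golay_word: "(\<Sum>j<12. golay_word a j) = 6 * a 0"
proof -
  have "(\<Sum>j<12. golay_word a j) = (\<Sum>i<6. a i * (\<Sum>j<12. golayG ! i ! j))"
    by (simp add: golay_word_def sum_distrib_left sum.swap[of _ "{..<12::nat}"])
  also have "\<dots> = (\<Sum>i<6. if i = 0 then 6 * a i else 0)"
    by (rule sum.cong) (auto simp: golayG_row_sum)
  finally show ?thesis
    by simp
qed

text \<open>Coordinates \<open>v = m \<one> + \<theta> c + 3 z\<close> of a Leech vector, in which neither \<open>m\<close> nor the
  Golay word \<open>c\<close> is reduced modulo 3.\<close>

definition leech_coords :: "complex list \<Rightarrow> int \<Rightarrow> (nat \<Rightarrow> int) \<Rightarrow> (nat \<Rightarrow> complex) \<Rightarrow> bool" where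
  "leech_coords v m a z \<longleftrightarrow> (\<forall>i<12. z i \<in> Eis) \<and> cong_theta (\<Sum>i<12. z i) (of_int m) \<and>
     (\<forall>i<12. v ! i = of_int m + theta * of_int (golay_word a i) + 3 * z i)"

lemma reduces_to_golay12E:
  assumes "length c = 12" "w \<in> golay12" "reduces_to (map of_int c) w"
  obtains a r where "\<forall>i<12. c ! i = golay_word a i + 3 * r i"
proof -
  obtain a where red: "reduces_to (map of_int c) (map (\<lambda>j. golay_word a j mod 3) [0..<12])"
    using assms(2,3) unfolding golay12_def golay_word_def by blast
  have "(3::int) dvd (c ! i - golay_word a i)" if "i < 12" for i
  proof -
    have "(3::int) dvd (c ! i - golay_word a i mod 3)"
      using red that assms(1) by (simp add: reduces_to_def cong_theta_of_int)
    moreover have "(3::int) dvd (golay_word a i mod 3 - golay_word a i)"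
      by presburger
    ultimately show ?thesis
      using dvd_add by fastforce
  qed
  then have "\<forall>i<12. c ! i = golay_word a i + 3 * ((c ! i - golay_word a i) div 3)"
    by auto
  then show thesis
    by (rule that)
qed

lemma golay_word_balanced_representative:
  obtains c k where "length c = 12" "set c \<subseteq> {0, 1, -1}" "\<exists>w\<in>golay12. reduces_to (map of_int c) w"
    "\<forall>i<12. golay_word a i = c ! i + 3 * k i"
proof
  let ?c = "map (\<lambda>i. (golay_word a i + 1) mod 3 - 1) [0..<12]"
  let ?w = "map (\<lambda>j. golay_word a j mod 3) [0..<12]"
  show "length ?c = 12" "set ?c \<subseteq> {0, 1, -1}"
    by auto
  have "(x + 1) mod 3 - 1 + 3 * ((x + 1) div 3) = x" for x :: int
    by presburger
  then show "\<forall>i<12. golay_word a i = ?c ! i + 3 * ((golay_word a i + 1) div 3)"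
    by simp
  have "?w \<in> golay12"
    unfolding golay12_def golay_word_def by blast
  moreover have "reduces_to (map of_int ?c) ?w"
    unfolding reduces_to_def
  proof (intro conjI allI impI)
    fix i assume i: "i < length (map (of_int :: int \<Rightarrow> complex) ?c)"
    have "(3::int) dvd ((golay_word a i + 1) mod 3 - 1 - golay_word a i mod 3)"
      by presburger
    then show "cong_theta (map of_int ?c ! i) (of_int (?w ! i))"
      using i by (simp add: cong_theta_of_int del: of_int_diff)
  qed simp
  ultimately show "\<exists>w\<in>golay12. reduces_to (map of_int ?c) w"
    by blast
qed

lemma Leech_imp_leech_coords:
  assumes "v \<in> Leech"
  shows "length v = 12" "\<exists>m a z. leech_coords v m a z"
proof -
  obtain m c z w where len: "length v = 12" and c: "length c = 12" "w \<in> golay12"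
    "reduces_to (map of_int c) w" and z: "z \<in> Evecs 12"
    and sum_z: "cong_theta (sum_list z) (of_int m)"
    and v: "\<forall>i<12. v ! i = of_int m + theta * of_int (c ! i) + 3 * z ! i"
    using assms unfolding Leech_def by blast
  show "length v = 12"
    by (fact len)
  obtain a r where r: "\<forall>i<12. c ! i = golay_word a i + 3 * r i"
    using c by (rule reduces_to_golay12E)
  define z' where "z' i = z ! i + theta * of_int (r i)" for i
  have "leech_coords v m a z'"
    unfolding leech_coords_def
  proof (intro conjI allI impI)
    show "z' i \<in> Eis" if "i < 12" for i
      using z that by (simp add: z'_def Evecs_iff_nth)
    obtain e where "e \<in> Eis" "sum_list z - of_int m = theta * e"
      using sum_z unfolding cong_theta_def by blast
    moreover have "sum_list z = (\<Sum>i<12. z ! i)"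
      using z by (simp add: Evecs_def sum_list_sum_nth atLeast0LessThan)
    ultimately have "(\<Sum>i<12. z' i) - of_int m = theta * (e + of_int (\<Sum>i<12. r i))"
      by (simp add: z'_def sum.distrib sum_distrib_left algebra_simps)
    then show "cong_theta (\<Sum>i<12. z' i) (of_int m)"
      unfolding cong_theta_def using \<open>e \<in> Eis\<close> by auto
    show "v ! i = of_int m + theta * of_int (golay_word a i) + 3 * z' i" if "i < 12" for i
      using v r that by (simp add: z'_def algebra_simps)
  qed
  then show "\<exists>m a z. leech_coords v m a z"
    by blast
qed

lemma leech_coords_imp_Leech:
  assumes "length v = 12" "leech_coords v m a z"
  shows "v \<in> Leech"
proof -
  have z: "\<forall>i<12. z i \<in> Eis" and sum_z: "cong_theta (\<Sum>i<12. z i) (of_int m)"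
    and v: "\<forall>i<12. v ! i = of_int m + theta * of_int (golay_word a i) + 3 * z i"
    using assms(2) unfolding leech_coords_def by blast+
  obtain c k where c: "length c = 12" "set c \<subseteq> {0, 1, -1}" "\<exists>w\<in>golay12. reduces_to (map of_int c) w"
    and gw: "\<forall>i<12. golay_word a i = c ! i + 3 * k i"
    by (rule golay_word_balanced_representative)
  define m0 where "m0 = (m + 1) mod 3 - 1"
  define km where "km = (m + 1) div 3"
  have m: "m = m0 + 3 * km"
    unfolding m0_def km_def by presburger
  have m0: "m0 \<in> {0, 1, -1}"
    unfolding m0_def by auto
  define z' where "z' = map (\<lambda>i. z i + of_int km + theta * of_int (k i)) [0..<12]"
  have "z' \<in> Evecs 12"
    using z by (auto simp: Evecs_def z'_def)
  moreover have "cong_theta (sum_list z') (of_int m0)"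
  proof -
    obtain e where e: "e \<in> Eis" "(\<Sum>i<12. z i) - of_int m = theta * e"
      using sum_z unfolding cong_theta_def by blast
    have "sum_list z' = (\<Sum>i<12. z i) + 12 * of_int km + theta * of_int (\<Sum>i<12. k i)"
      by (simp add: z'_def sum_list_map_upt sum.distrib sum_distrib_left)
    also have "\<dots> = of_int m0 + theta * (e - 5 * theta * of_int km + of_int (\<Sum>i<12. k i))"
      using e(2) theta_squared by (simp add: m algebra_simps) (simp add: mult.assoc[symmetric])
    finally show ?thesis
      unfolding cong_theta_def using e(1) by auto
  qed
  moreover have "\<forall>i<12. v ! i = of_int m0 + theta * of_int (c ! i) + 3 * z' ! i"
    using v gw by (simp add: z'_def m algebra_simps)
  ultimately show ?thesis
    unfolding Leech_def using assms(1) c m0 by blast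
qed

lemma Leech_iff: "v \<in> Leech \<longleftrightarrow> length v = 12 \<and> (\<exists>m a z. leech_coords v m a z)"
  using Leech_imp_leech_coords leech_coords_imp_Leech by blast

lemma leech_coords_add:
  assumes "leech_coords u m a z" "leech_coords v m' a' z'" "length u = 12" "length v = 12"
  shows "leech_coords (vadd u v) (m + m') (\<lambda>i. a i + a' i) (\<lambda>i. z i + z' i)"
  using assms cong_theta_add[of "\<Sum>i<12. z i" _ "\<Sum>i<12. z' i"]
  by (auto simp: leech_coords_def vadd_def golay_word_add sum.distrib algebra_simps)

lemma leech_coords_int_mult:
  assumes "leech_coords v m a z" "length v = 12"
  shows "leech_coords (vscale (of_int n) v) (n * m) (\<lambda>i. n * a i) (\<lambda>i. of_int n * z i)"
proof -
  have "cong_theta (of_int n * (\<Sum>i<12. z i)) (of_int n * of_int m)"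
    using assms by (intro cong_theta_mult) (auto simp: leech_coords_def cong_theta_refl)
  then show ?thesis
    using assms by (auto simp: leech_coords_def vscale_def golay_word_mult sum_distrib_left algebra_simps)
qed

lemma omega_mult_leech_entry:
  fixes m c z d :: complex
  shows "omega * (m + theta * c + 3 * z) = m + theta * (c - m + 6 * m * d)
    + 3 * (z - omega * omega * theta * z + omega * omega * c + omega * m - 2 * m * theta * d)"
  unfolding theta_eq using omega_squared by algebra

definition omega_leech_z :: "int \<Rightarrow> (nat \<Rightarrow> int) \<Rightarrow> (nat \<Rightarrow> complex) \<Rightarrow> nat \<Rightarrow> complex" where
  "omega_leech_z m a z i = z i - omega * omega * theta * z i + omega * omega * of_int (golay_word a i)
     + omega * of_int m - 2 * of_int m * theta * (if i = 6 then 1 else 0)"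

lemma sum_omega_leech_z:
  assumes z: "\<forall>i<12. z i \<in> Eis" and sum_z: "cong_theta (\<Sum>i<12. z i) (of_int m)"
  shows "cong_theta (\<Sum>i<12. omega_leech_z m a z i) (of_int m)"
proof -
  obtain e where e: "e \<in> Eis" "(\<Sum>i<12. z i) - of_int m = theta * e"
    using sum_z unfolding cong_theta_def by blast
  define e' where "e' = e - omega * omega * (\<Sum>i<12. z i) - 2 * of_int m
      - 2 * theta * omega * omega * of_int (a 0) - 4 * theta * omega * of_int m"
  have "(\<Sum>i<12. omega_leech_z m a z i) = (\<Sum>i<12. z i) - omega * omega * theta * (\<Sum>i<12. z i)
      + omega * omega * (\<Sum>i<12. of_int (golay_word a i)) + 12 * omega * of_int m - 2 * of_int m * theta"
    by (simp add: omega_leech_z_def sum.distrib sum_subtractf flip: sum_distrib_left)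
  also have "\<dots> = of_int m + theta * e'"
  proof -
    have "(\<Sum>i<12. of_int (golay_word a i) :: complex) = 6 * of_int (a 0)"
      by (simp add: sum_golay_word flip: of_int_sum)
    then show ?thesis
      using e(2) theta_squared unfolding e'_def by algebra
  qed
  finally have "(\<Sum>i<12. omega_leech_z m a z i) - of_int m = theta * e'"
    by simp
  moreover have "e' \<in> Eis"
    using e(1) Eis_sum[of "{..<12}" z] z by (simp add: e'_def)
  ultimately show ?thesis
    unfolding cong_theta_def by auto
qed

text \<open>Since \<open>\<omega> - 1 = -\<omega>\<^sup>2 \<theta>\<close>, the vector \<open>\<omega> v\<close> keeps \<open>m\<close> and its Golay word changes by
  \<open>-m \<one>\<close>; the all-ones word is a codeword, the sum of the rows of \<open>golayG\<close> up to the \<open>6\<close> in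
  coordinate 6 of \<open>golay_word_shift\<close>.\<close>

lemma leech_coords_omega_mult:
  assumes "leech_coords v m a z" "length v = 12"
  shows "leech_coords (vscale omega v) m (\<lambda>i. a i - m) (omega_leech_z m a z)"
  unfolding leech_coords_def
proof (intro conjI allI impI)
  have z: "\<forall>i<12. z i \<in> Eis" and v: "\<forall>i<12. v ! i = of_int m + theta * of_int (golay_word a i) + 3 * z i"
    using assms(1) unfolding leech_coords_def by blast+
  then show "omega_leech_z m a z i \<in> Eis" if "i < 12" for i
    using that by (simp add: omega_leech_z_def)
  show "cong_theta (\<Sum>i<12. omega_leech_z m a z i) (of_int m)"
    using assms(1) sum_omega_leech_z unfolding leech_coords_def by blast
  fix i :: nat assume i: "i < 12"
  have "vscale omega v ! i = omega * (of_int m + theta * of_int (golay_word a i) + 3 * z i)"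
    using v i assms(2) by (simp add: vscale_def)
  also have "\<dots> = of_int m + theta * (of_int (golay_word a i) - of_int m + 6 * of_int m * (if i = 6 then 1 else 0))
      + 3 * omega_leech_z m a z i"
    unfolding omega_leech_z_def by (rule omega_mult_leech_entry)
  also have "\<dots> = of_int m + theta * of_int (golay_word (\<lambda>i. a i - m) i) + 3 * omega_leech_z m a z i"
    using i by (simp add: golay_word_shift)
  finally show "vscale omega v ! i = of_int m + theta * of_int (golay_word (\<lambda>i. a i - m) i)
      + 3 * omega_leech_z m a z i" .
qed

lemma Leech_vadd: "u \<in> Leech \<Longrightarrow> v \<in> Leech \<Longrightarrow> vadd u v \<in> Leech"
  unfolding Leech_iff using leech_coords_add by (fastforce simp: vadd_def)

lemma Leech_vscale_int: "v \<in> Leech \<Longrightarrow> vscale (of_int n) v \<in> Leech"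
  unfolding Leech_iff using leech_coords_int_mult by (fastforce simp: vscale_def)

lemma Leech_vscale_omega: "v \<in> Leech \<Longrightarrow> vscale omega v \<in> Leech"
  unfolding Leech_iff using leech_coords_omega_mult by (fastforce simp: vscale_def)

lemma vscale_of_zw:
  "vscale (of_zw p) v = vadd (vscale (of_int (fst p)) v) (vscale (of_int (snd p)) (vscale omega v))"
  by (intro nth_equalityI) (simp_all add: vscale_def vadd_def of_zw_def algebra_simps)

lemma Eis_submodule_Leech: "Eis_submodule 12 Leech"
  unfolding Eis_submodule_def
proof (intro conjI ballI subsetI)
  fix v assume "v \<in> Leech"
  then obtain m a z where "length v = 12" "leech_coords v m a z"
    unfolding Leech_iff by blast
  then show "v \<in> Evecs 12"
    by (auto simp: Evecs_def leech_coords_def in_set_conv_nth)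
next
  have "leech_coords (replicate 12 0) 0 (\<lambda>_. 0) (\<lambda>_. 0)"
    by (simp add: leech_coords_def golay_word_def cong_theta_refl)
  then show "replicate 12 0 \<in> Leech"
    unfolding Leech_iff by auto
next
  show "vadd u v \<in> Leech" if "u \<in> Leech" "v \<in> Leech" for u v
    using that by (rule Leech_vadd)
  show "vscale x v \<in> Leech" if "x \<in> Eis" "v \<in> Leech" for x v
    using that by (auto elim!: EisE simp: vscale_of_zw
        intro!: Leech_vadd Leech_vscale_int Leech_vscale_omega)
qed

section \<open>\<open>E\<^sub>8\<close> over \<open>\<E>\<close>\<close>

definition tetra_word :: "int \<Rightarrow> int \<Rightarrow> nat \<Rightarrow> int" where
  "tetra_word \<alpha> \<beta> i = \<alpha> * [1, 1, -1, 0] ! i + \<beta> * [0, 1, 1, 1] ! i"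

lemma E8E_iff:
  "v \<in> E8E \<longleftrightarrow> v \<in> Evecs 4 \<and> (\<exists>\<alpha> \<beta>. \<forall>i<4. cong_theta (v ! i) (of_int (tetra_word \<alpha> \<beta> i)))"
proof -
  have tetracode_eq: "tetracode = {map (\<lambda>i. tetra_word \<alpha> \<beta> i mod 3) [0..<4] | \<alpha> \<beta>. True}"
    by (simp add: tetracode_def tetra_word_def)
  have mod3: "cong_theta (of_int (k mod 3)) (of_int k)" for k :: int
    unfolding cong_theta_of_int by presburger
  have "reduces_to v (map (\<lambda>i. tetra_word \<alpha> \<beta> i mod 3) [0..<4]) \<longleftrightarrow>
      (\<forall>i<4. cong_theta (v ! i) (of_int (tetra_word \<alpha> \<beta> i)))" if "length v = 4" for \<alpha> \<beta>
  proof -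
    have "cong_theta (v ! i) (of_int (tetra_word \<alpha> \<beta> i mod 3)) \<longleftrightarrow>
        cong_theta (v ! i) (of_int (tetra_word \<alpha> \<beta> i))" for i
      using cong_theta_trans[OF _ mod3] cong_theta_trans[OF _ cong_theta_sym[OF mod3]] by blast
    then show ?thesis
      using that by (simp add: reduces_to_def)
  qed
  then show ?thesis
    unfolding E8E_def tetracode_eq by (auto simp: Evecs_def; blast)
qed

definition E8_vec :: "int \<Rightarrow> int \<Rightarrow> (nat \<Rightarrow> complex) \<Rightarrow> complex list" where
  "E8_vec \<alpha> \<beta> E = map (\<lambda>i. of_int (tetra_word \<alpha> \<beta> i) + theta * E i) [0..<4]"

lemma E8E_coords:
  assumes "v \<in> E8E"
  obtains \<alpha> \<beta> E where "\<forall>i<4. E i \<in> Eis" "v = E8_vec \<alpha> \<beta> E"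
proof -
  obtain \<alpha> \<beta> where len: "length v = 4" and "\<forall>i<4. cong_theta (v ! i) (of_int (tetra_word \<alpha> \<beta> i))"
    using assms unfolding E8E_iff Evecs_def by blast
  then have "\<forall>i. \<exists>e. i < 4 \<longrightarrow> e \<in> Eis \<and> v ! i = of_int (tetra_word \<alpha> \<beta> i) + theta * e"
    unfolding cong_theta_def by (metis add.commute diff_eq_eq)
  then obtain E where E: "\<forall>i. i < 4 \<longrightarrow> E i \<in> Eis \<and> v ! i = of_int (tetra_word \<alpha> \<beta> i) + theta * E i"
    by metis
  then have "v = E8_vec \<alpha> \<beta> E"
    using len by (intro nth_equalityI) (simp_all add: E8_vec_def)
  with E show thesis
    using that by blast
qed

lemma tetra_word_add: "tetra_word (\<alpha> + \<alpha>') (\<beta> + \<beta>') i = tetra_word \<alpha> \<beta> i + tetra_word \<alpha>' \<beta>' i"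
  by (simp add: tetra_word_def algebra_simps)

lemma tetra_word_mult: "tetra_word (r * \<alpha>) (r * \<beta>) i = r * tetra_word \<alpha> \<beta> i"
  by (simp add: tetra_word_def algebra_simps)

lemma E8E_vadd:
  assumes "u \<in> E8E" "v \<in> E8E"
  shows "vadd u v \<in> E8E"
proof -
  obtain \<alpha> \<beta> \<alpha>' \<beta>' where u: "u \<in> Evecs 4" "\<forall>i<4. cong_theta (u ! i) (of_int (tetra_word \<alpha> \<beta> i))"
    and v: "v \<in> Evecs 4" "\<forall>i<4. cong_theta (v ! i) (of_int (tetra_word \<alpha>' \<beta>' i))"
    using assms unfolding E8E_iff by blast
  have nth: "vadd u v ! i = u ! i + v ! i" if "i < 4" for i
    using u(1) v(1) that by (simp add: vadd_def Evecs_def)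
  have "cong_theta (vadd u v ! i) (of_int (tetra_word (\<alpha> + \<alpha>') (\<beta> + \<beta>') i))" if "i < 4" for i
    using cong_theta_add[OF u(2)[rule_format, OF that] v(2)[rule_format, OF that]]
    by (simp only: nth[OF that] tetra_word_add of_int_add)
  moreover have "vadd u v \<in> Evecs 4"
    using u(1) v(1) nth by (simp add: Evecs_iff_nth vadd_def)
  ultimately show ?thesis
    unfolding E8E_iff by blast
qed

lemma E8E_vscale:
  assumes x: "x \<in> Eis" and "v \<in> E8E"
  shows "vscale x v \<in> E8E"
proof -
  obtain \<alpha> \<beta> where v: "v \<in> Evecs 4" "\<forall>i<4. cong_theta (v ! i) (of_int (tetra_word \<alpha> \<beta> i))"
    using assms(2) unfolding E8E_iff by blast
  obtain r where r: "cong_theta x (of_int r)"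
    using Eis_cong_theta_int[OF x] .
  have nth: "vscale x v ! i = x * v ! i" if "i < 4" for i
    using v(1) that by (simp add: vscale_def Evecs_def)
  have "cong_theta (vscale x v ! i) (of_int (tetra_word (r * \<alpha>) (r * \<beta>) i))" if "i < 4" for i
    using cong_theta_mult[OF x _ r v(2)[rule_format, OF that]]
    by (simp only: nth[OF that] tetra_word_mult of_int_mult Eis_of_int simp_thms)
  moreover have "vscale x v \<in> Evecs 4"
    using v(1) x nth by (simp add: Evecs_iff_nth vscale_def)
  ultimately show ?thesis
    unfolding E8E_iff by blast
qed

lemma Eis_submodule_E8E: "Eis_submodule 4 E8E"
proof -
  have "\<forall>i<4. cong_theta (replicate 4 0 ! i) (of_int (tetra_word 0 0 i))"
    by (simp add: tetra_word_def cong_theta_refl)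
  then have "replicate 4 0 \<in> E8E"
    unfolding E8E_iff Evecs_iff_nth by auto
  moreover have "E8E \<subseteq> Evecs 4"
    by (auto simp: E8E_iff)
  ultimately show ?thesis
    unfolding Eis_submodule_def using E8E_vadd E8E_vscale by blast
qed

lemma E8cubeH_nested:
  "E8cubeH = {a @ x | a x. a \<in> E8E \<and> x \<in> {b @ y | b y. b \<in> E8E \<and> y \<in> {c @ h | c h. c \<in> E8E \<and> h \<in> Hplane}}}"
  unfolding E8cubeH_def by blast

lemma Eis_submodule_Lbig: "Eis_submodule 14 Lbig"
  using Eis_submodule_append[OF Eis_submodule_Leech Eis_submodule_Evecs[of 2]]
  by (simp add: Lbig_def Hplane_def)

lemma Eis_submodule_E8cubeH: "Eis_submodule 14 E8cubeH"
  using Eis_submodule_append[OF Eis_submodule_E8E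
      Eis_submodule_append[OF Eis_submodule_E8E
        Eis_submodule_append[OF Eis_submodule_E8E Eis_submodule_Evecs[of 2]]]]
  by (simp add: E8cubeH_nested Hplane_def)

lemma Lbig_length: "v \<in> Lbig \<Longrightarrow> length v = 14"
  using Eis_submodule_Lbig by (auto simp: Eis_submodule_def Evecs_def)

lemma E8cubeH_length: "v \<in> E8cubeH \<Longrightarrow> length v = 14"
  using Eis_submodule_E8cubeH by (auto simp: Eis_submodule_def Evecs_def)

definition gram_form :: "nat \<Rightarrow> (nat \<Rightarrow> nat \<Rightarrow> complex) \<Rightarrow> complex list \<Rightarrow> complex list \<Rightarrow> complex" where
  "gram_form n Q x y = (\<Sum>i<n. \<Sum>j<n. cnj (x ! i) * Q i j * y ! j)"

lemma gram_form_vecmat: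
  assumes "M \<noteq> []" "\<forall>r\<in>set M. length r = n"
  shows "gram_form n Q (vecmat u M) (vecmat v M)
    = (\<Sum>k<length M. \<Sum>l<length M. cnj (u ! k) * v ! l * gram_form n Q (M ! k) (M ! l))"
proof -
  have hd: "length (hd M) = n"
    using assms by simp
  have "gram_form n Q (vecmat u M) (vecmat v M)
      = (\<Sum>i<n. \<Sum>j<n. \<Sum>k<length M. \<Sum>l<length M.
           cnj (u ! k) * v ! l * (cnj (M ! k ! i) * Q i j * M ! l ! j))"
    by (simp add: gram_form_def nth_vecmat hd sum_distrib_left sum_distrib_right mult_ac)
  also have "\<dots> = (\<Sum>k<length M. \<Sum>l<length M. \<Sum>i<n. \<Sum>j<n.
           cnj (u ! k) * v ! l * (cnj (M ! k ! i) * Q i j * M ! l ! j))"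
    by (simp only: sum.swap[of _ "{..<n}" "{..<length M}"])
  also have "\<dots> = (\<Sum>k<length M. \<Sum>l<length M. cnj (u ! k) * v ! l * gram_form n Q (M ! k) (M ! l))"
    by (simp add: gram_form_def sum_distrib_left)
  finally show ?thesis .
qed

lemma gram_form_vscale:
  assumes "length x = n" "length y = n"
  shows "gram_form n Q (vscale a x) (vscale b y) = cnj a * b * gram_form n Q x y"
  using assms by (simp add: gram_form_def vscale_def sum_distrib_left mult_ac)

definition block_form :: "complex \<Rightarrow> complex \<Rightarrow> complex list \<Rightarrow> complex list \<Rightarrow> complex" where
  "block_form c s x y = c * std_herm (take 12 x) (take 12 y) + s * H_form (drop 12 x) (drop 12 y)"

definition block_gram :: "complex \<Rightarrow> complex \<Rightarrow> nat \<Rightarrow> nat \<Rightarrow> complex" where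
  "block_gram c s i j =
     (if i = j \<and> i < 12 then c else if i = 12 \<and> j = 13 then s * cnj theta
      else if i = 13 \<and> j = 12 then s * theta else 0)"

lemma block_form_eq_gram_form:
  assumes "length x = 14" "length y = 14"
  shows "block_form c s x y = gram_form 14 (block_gram c s) x y"
proof -
  have row: "(\<Sum>j<14. block_gram c s i j * y ! j)
      = (if i < 12 then c * y ! i else if i = 12 then s * cnj theta * y ! 13
         else if i = 13 then s * theta * y ! 12 else 0)" for i
  proof -
    have "(\<Sum>j<12. block_gram c s i j * y ! j) = (\<Sum>j<12. if j = i \<and> i < 12 then c * y ! j else 0)"
      by (rule sum.cong) (auto simp: block_gram_def)
    then show ?thesis
      by (simp add: sum_lessThan_14 block_gram_def)
  qed
  have "gram_form 14 (block_gram c s) x y = (\<Sum>i<14. cnj (x ! i) * (\<Sum>j<14. block_gram c s i j * y ! j))"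
    by (simp add: gram_form_def sum_distrib_left mult.assoc)
  also have "\<dots> = c * (\<Sum>i<12. cnj (x ! i) * y ! i)
      + s * (cnj (x ! 12) * cnj theta * y ! 13 + cnj (x ! 13) * theta * y ! 12)"
    unfolding row by (simp add: sum_lessThan_14 sum_distrib_left algebra_simps)
  also have "\<dots> = block_form c s x y"
    using assms by (simp add: block_form_def std_herm_def H_form_def)
  finally show ?thesis ..
qed

lemma Lbig_form_eq: "Lbig_form = block_form (- 1 / 3) 1"
  by (simp add: fun_eq_iff Lbig_form_def Leech_form_def block_form_def)

lemma E8cubeH_form_eq:
  assumes "length x = 14" "length y = 14"
  shows "E8cubeH_form x y = block_form (- 1) 1 x y"
  using assms
  by (simp add: E8cubeH_form_def E8_form_def block_form_def std_herm_def sum_lessThan_12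
      lessThan_Suc numeral_eq_Suc)

lemma block_form_scale: "block_form (a * c) (a * s) x y = a * block_form c s x y"
  by (simp add: block_form_def algebra_simps)

lemma block_form_vscale:
  assumes "length x = 14" "length y = 14"
  shows "block_form c s (vscale a x) (vscale b y) = cnj a * b * block_form c s x y"
proof -
  have "length (vscale a x) = 14" "length (vscale b y) = 14"
    using assms by (simp_all add: vscale_def)
  then show ?thesis
    using assms by (simp add: block_form_eq_gram_form gram_form_vscale)
qed

lemma block_form_vecmat:
  assumes "M \<noteq> []" "\<forall>r\<in>set M. length r = 14"
  shows "block_form c s (vecmat u M) (vecmat v M)
    = (\<Sum>k<length M. \<Sum>l<length M. cnj (u ! k) * v ! l * block_form c s (M ! k) (M ! l))"
  using assms by (simp add: block_form_eq_gram_form gram_form_vecmat)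

definition zw_block_form :: "int \<Rightarrow> int \<Rightarrow> zw list \<Rightarrow> zw list \<Rightarrow> zw" where
  "zw_block_form c s x y =
     zw_mult (c, 0) (\<Sum>i\<leftarrow>[0..<12]. zw_mult (zw_cnj (x ! i)) (y ! i))
   + zw_mult (s, 0) (zw_mult (zw_mult (zw_cnj (x ! 12)) (-1, -2)) (y ! 13)
                    + zw_mult (zw_mult (zw_cnj (x ! 13)) (1, 2)) (y ! 12))"

lemma of_zw_zw_block_form:
  assumes "length x = 14" "length y = 14"
  shows "of_zw (zw_block_form c s x y) = block_form (of_int c) (of_int s) (map of_zw x) (map of_zw y)"
proof -
  have "of_zw (-1, -2) = cnj theta"
    by (simp add: of_zw_def theta_def cnj_omega)
  then show ?thesis
    using assms
    by (simp add: zw_block_form_def block_form_def std_herm_def H_form_def sum_list_map_upt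
        of_zw_add of_zw_sum of_zw_mult of_zw_cnj of_zw_theta)
qed

definition leech_residue :: "zw list \<Rightarrow> int \<Rightarrow> (nat \<Rightarrow> int) \<Rightarrow> nat \<Rightarrow> zw" where
  "leech_residue r m a i = r ! i - (m, 0) - zw_mult (1, 2) (golay_word a i, 0)"

definition leech_witness :: "zw list \<Rightarrow> int \<Rightarrow> (nat \<Rightarrow> int) \<Rightarrow> bool" where
  "leech_witness r m a \<longleftrightarrow>
     list_all (\<lambda>i. 3 dvd fst (leech_residue r m a i) \<and> 3 dvd snd (leech_residue r m a i)) [0..<12] \<and>
     3 dvd ((\<Sum>i\<leftarrow>[0..<12]. fst (zw_div 3 (leech_residue r m a i)) + snd (zw_div 3 (leech_residue r m a i))) - m)"

lemma leech_witness_imp_Leech: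
  assumes "length r = 12" "leech_witness r m a"
  shows "map of_zw r \<in> Leech"
proof -
  define z where "z i = of_zw (zw_div 3 (leech_residue r m a i))" for i
  have dvd: "3 dvd fst (leech_residue r m a i)" "3 dvd snd (leech_residue r m a i)" if "i < 12" for i
    using assms(2) that by (auto simp: leech_witness_def list_all_iff)
  have "leech_coords (map of_zw r) m a z"
    unfolding leech_coords_def
  proof (intro conjI allI impI)
    show "z i \<in> Eis" for i
      by (simp add: z_def)
    have "(\<Sum>i<12. z i) = of_zw (\<Sum>i<12. zw_div 3 (leech_residue r m a i))"
      by (simp add: z_def of_zw_sum)
    moreover have "3 dvd (fst (\<Sum>i<12. zw_div 3 (leech_residue r m a i))
        + snd (\<Sum>i<12. zw_div 3 (leech_residue r m a i)) - m)"
      using assms(2) by (simp add: leech_witness_def sum_list_map_upt fst_sum snd_sum sum.distrib)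
    ultimately show "cong_theta (\<Sum>i<12. z i) (of_int m)"
      using cong_theta_of_zw[of _ "(m, 0)"] by simp
    fix i :: nat assume i: "i < 12"
    have "3 * z i = of_zw (leech_residue r m a i)"
      using dvd[OF i] by (auto simp: z_def zw_div_def of_zw_def elim!: dvdE)
    then show "map of_zw r ! i = of_int m + theta * of_int (golay_word a i) + 3 * z i"
      using i assms(1)
      by (simp add: leech_residue_def of_zw_diff) (simp add: of_zw_def theta_eq algebra_simps)
  qed
  then show ?thesis
    using assms(1) by (auto simp: Leech_iff)
qed

text \<open>For a vector of \<open>L\<close> the witnesses can be read off: \<open>m\<close> is the residue of the first
  coordinate modulo \<open>\<theta>\<close>, and the information coordinates of the Golay word are those of
  \<open>(v\<^sub>j - m) / \<theta>\<close>, which for \<open>v\<^sub>j - m = a + b \<omega>\<close> have residue \<open>b - a\<close>.\<close>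

definition Lbig_test :: "zw list \<Rightarrow> bool" where
  "Lbig_test r \<longleftrightarrow> length r = 14 \<and>
     (let m = fst (r ! 0) + snd (r ! 0) in leech_witness (take 12 r) m (\<lambda>j. snd (r ! j) - fst (r ! j) + m))"

lemma Lbig_test_imp_Lbig:
  assumes "Lbig_test r"
  shows "map of_zw r \<in> Lbig"
proof -
  have "map of_zw (take 12 r) \<in> Leech"
    using assms by (intro leech_witness_imp_Leech) (auto simp: Lbig_test_def Let_def)
  moreover have "map of_zw (drop 12 r) \<in> Hplane"
    using assms by (simp add: Lbig_test_def Hplane_def map_of_zw_in_Evecs)
  moreover have "map of_zw r = map of_zw (take 12 r) @ map of_zw (drop 12 r)"
    by (simp flip: map_append)
  ultimately show ?thesis
    unfolding Lbig_def by blast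
qed

definition tetra_witness :: "zw list \<Rightarrow> int \<Rightarrow> int \<Rightarrow> bool" where
  "tetra_witness r \<alpha> \<beta> \<longleftrightarrow> list_all (\<lambda>i. 3 dvd (fst (r ! i) + snd (r ! i) - tetra_word \<alpha> \<beta> i)) [0..<4]"

lemma tetra_witness_imp_E8E:
  assumes "length r = 4" "tetra_witness r \<alpha> \<beta>"
  shows "map of_zw r \<in> E8E"
proof -
  have "cong_theta (of_zw (r ! i)) (of_int (tetra_word \<alpha> \<beta> i))" if "i < 4" for i
    using assms(2) that cong_theta_of_zw[of "r ! i" "(tetra_word \<alpha> \<beta> i, 0)"]
    by (simp add: tetra_witness_def list_all_iff)
  then show ?thesis
    using assms(1) by (auto simp: E8E_iff map_of_zw_in_Evecs)
qed

definition tetra_test :: "zw list \<Rightarrow> bool" where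
  "tetra_test s \<longleftrightarrow> length s = 4 \<and> tetra_witness s (fst (s ! 0) + snd (s ! 0)) (fst (s ! 3) + snd (s ! 3))"

definition E8cubeH_test :: "zw list \<Rightarrow> bool" where
  "E8cubeH_test r \<longleftrightarrow> length r = 14 \<and>
     tetra_test (take 4 r) \<and> tetra_test (take 4 (drop 4 r)) \<and> tetra_test (take 4 (drop 8 r))"

lemma E8cubeH_test_imp_E8cubeH:
  assumes "E8cubeH_test r"
  shows "map of_zw r \<in> E8cubeH"
proof -
  have blocks: "map of_zw (take 4 (drop b r)) \<in> E8E" if "b \<in> {0, 4, 8}" for b
    using assms that unfolding E8cubeH_test_def tetra_test_def by (auto intro: tetra_witness_imp_E8E)
  have "drop 4 r = take 4 (drop 4 r) @ drop 8 r" "drop 8 r = take 4 (drop 8 r) @ drop 12 r"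
    using append_take_drop_id[of 4 "drop 4 r"] append_take_drop_id[of 4 "drop 8 r"] by simp_all
  then have "r = take 4 r @ take 4 (drop 4 r) @ take 4 (drop 8 r) @ drop 12 r"
    using append_take_drop_id[of 4 r] by simp
  then have "map of_zw r = map of_zw (take 4 (drop 0 r)) @ map of_zw (take 4 (drop 4 r))
      @ map of_zw (take 4 (drop 8 r)) @ map of_zw (drop 12 r)"
    by (metis drop_0 map_append)
  moreover have "map of_zw (drop 12 r) \<in> Hplane"
    using assms by (simp add: E8cubeH_test_def Hplane_def map_of_zw_in_Evecs)
  ultimately show ?thesis
    unfolding E8cubeH_def using blocks by blast
qed

text \<open>The rows are \<open>(4, 1, \<dots>, 1)\<close>, \<open>\<theta>\<close> times the rows of \<open>golayG\<close>, \<open>3 \<theta> e\<^sub>0\<close>,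
  \<open>3 (e\<^sub>i - e\<^sub>0)\<close> for \<open>1 \<le> i \<le> 11\<close>, and the basis of \<open>H\<close>.\<close>

definition Lbig_gens :: "zw list list" where
  "Lbig_gens = [
  [(4,0),(1,0),(1,0),(1,0),(1,0),(1,0),(1,0),(1,0),(1,0),(1,0),(1,0),(1,0),(0,0),(0,0)],
  [(1,2),(0,0),(0,0),(0,0),(0,0),(0,0),(0,0),(1,2),(1,2),(1,2),(1,2),(1,2),(0,0),(0,0)],
  [(0,0),(1,2),(0,0),(0,0),(0,0),(0,0),(-1,-2),(0,0),(1,2),(-1,-2),(-1,-2),(1,2),(0,0),(0,0)],
  [(0,0),(0,0),(1,2),(0,0),(0,0),(0,0),(-1,-2),(1,2),(0,0),(1,2),(-1,-2),(-1,-2),(0,0),(0,0)],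
  [(0,0),(0,0),(0,0),(1,2),(0,0),(0,0),(-1,-2),(-1,-2),(1,2),(0,0),(1,2),(-1,-2),(0,0),(0,0)],
  [(0,0),(0,0),(0,0),(0,0),(1,2),(0,0),(-1,-2),(-1,-2),(-1,-2),(1,2),(0,0),(1,2),(0,0),(0,0)],
  [(0,0),(0,0),(0,0),(0,0),(0,0),(1,2),(-1,-2),(1,2),(-1,-2),(-1,-2),(1,2),(0,0),(0,0),(0,0)],
  [(3,6),(0,0),(0,0),(0,0),(0,0),(0,0),(0,0),(0,0),(0,0),(0,0),(0,0),(0,0),(0,0),(0,0)],
  [(-3,0),(3,0),(0,0),(0,0),(0,0),(0,0),(0,0),(0,0),(0,0),(0,0),(0,0),(0,0),(0,0),(0,0)],
  [(-3,0),(0,0),(3,0),(0,0),(0,0),(0,0),(0,0),(0,0),(0,0),(0,0),(0,0),(0,0),(0,0),(0,0)],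
  [(-3,0),(0,0),(0,0),(3,0),(0,0),(0,0),(0,0),(0,0),(0,0),(0,0),(0,0),(0,0),(0,0),(0,0)],
  [(-3,0),(0,0),(0,0),(0,0),(3,0),(0,0),(0,0),(0,0),(0,0),(0,0),(0,0),(0,0),(0,0),(0,0)],
  [(-3,0),(0,0),(0,0),(0,0),(0,0),(3,0),(0,0),(0,0),(0,0),(0,0),(0,0),(0,0),(0,0),(0,0)],
  [(-3,0),(0,0),(0,0),(0,0),(0,0),(0,0),(3,0),(0,0),(0,0),(0,0),(0,0),(0,0),(0,0),(0,0)],
  [(-3,0),(0,0),(0,0),(0,0),(0,0),(0,0),(0,0),(3,0),(0,0),(0,0),(0,0),(0,0),(0,0),(0,0)],
  [(-3,0),(0,0),(0,0),(0,0),(0,0),(0,0),(0,0),(0,0),(3,0),(0,0),(0,0),(0,0),(0,0),(0,0)],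
  [(-3,0),(0,0),(0,0),(0,0),(0,0),(0,0),(0,0),(0,0),(0,0),(3,0),(0,0),(0,0),(0,0),(0,0)],
  [(-3,0),(0,0),(0,0),(0,0),(0,0),(0,0),(0,0),(0,0),(0,0),(0,0),(3,0),(0,0),(0,0),(0,0)],
  [(-3,0),(0,0),(0,0),(0,0),(0,0),(0,0),(0,0),(0,0),(0,0),(0,0),(0,0),(3,0),(0,0),(0,0)],
  [(0,0),(0,0),(0,0),(0,0),(0,0),(0,0),(0,0),(0,0),(0,0),(0,0),(0,0),(0,0),(1,0),(0,0)],
  [(0,0),(0,0),(0,0),(0,0),(0,0),(0,0),(0,0),(0,0),(0,0),(0,0),(0,0),(0,0),(0,0),(1,0)]]"

text \<open>In each \<open>E\<^sub>8\<close> block the two tetracode generators and the \<open>\<theta> e\<^sub>i\<close>; then the basis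
  of \<open>H\<close>.\<close>

definition E8cubeH_gens :: "zw list list" where
  "E8cubeH_gens = [
  [(1,0),(1,0),(-1,0),(0,0),(0,0),(0,0),(0,0),(0,0),(0,0),(0,0),(0,0),(0,0),(0,0),(0,0)],
  [(0,0),(1,0),(1,0),(1,0),(0,0),(0,0),(0,0),(0,0),(0,0),(0,0),(0,0),(0,0),(0,0),(0,0)],
  [(1,2),(0,0),(0,0),(0,0),(0,0),(0,0),(0,0),(0,0),(0,0),(0,0),(0,0),(0,0),(0,0),(0,0)],
  [(0,0),(1,2),(0,0),(0,0),(0,0),(0,0),(0,0),(0,0),(0,0),(0,0),(0,0),(0,0),(0,0),(0,0)],
  [(0,0),(0,0),(1,2),(0,0),(0,0),(0,0),(0,0),(0,0),(0,0),(0,0),(0,0),(0,0),(0,0),(0,0)],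
  [(0,0),(0,0),(0,0),(1,2),(0,0),(0,0),(0,0),(0,0),(0,0),(0,0),(0,0),(0,0),(0,0),(0,0)],
  [(0,0),(0,0),(0,0),(0,0),(1,0),(1,0),(-1,0),(0,0),(0,0),(0,0),(0,0),(0,0),(0,0),(0,0)],
  [(0,0),(0,0),(0,0),(0,0),(0,0),(1,0),(1,0),(1,0),(0,0),(0,0),(0,0),(0,0),(0,0),(0,0)],
  [(0,0),(0,0),(0,0),(0,0),(1,2),(0,0),(0,0),(0,0),(0,0),(0,0),(0,0),(0,0),(0,0),(0,0)],
  [(0,0),(0,0),(0,0),(0,0),(0,0),(1,2),(0,0),(0,0),(0,0),(0,0),(0,0),(0,0),(0,0),(0,0)],
  [(0,0),(0,0),(0,0),(0,0),(0,0),(0,0),(1,2),(0,0),(0,0),(0,0),(0,0),(0,0),(0,0),(0,0)],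
  [(0,0),(0,0),(0,0),(0,0),(0,0),(0,0),(0,0),(1,2),(0,0),(0,0),(0,0),(0,0),(0,0),(0,0)],
  [(0,0),(0,0),(0,0),(0,0),(0,0),(0,0),(0,0),(0,0),(1,0),(1,0),(-1,0),(0,0),(0,0),(0,0)],
  [(0,0),(0,0),(0,0),(0,0),(0,0),(0,0),(0,0),(0,0),(0,0),(1,0),(1,0),(1,0),(0,0),(0,0)],
  [(0,0),(0,0),(0,0),(0,0),(0,0),(0,0),(0,0),(0,0),(1,2),(0,0),(0,0),(0,0),(0,0),(0,0)],
  [(0,0),(0,0),(0,0),(0,0),(0,0),(0,0),(0,0),(0,0),(0,0),(1,2),(0,0),(0,0),(0,0),(0,0)],
  [(0,0),(0,0),(0,0),(0,0),(0,0),(0,0),(0,0),(0,0),(0,0),(0,0),(1,2),(0,0),(0,0),(0,0)],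
  [(0,0),(0,0),(0,0),(0,0),(0,0),(0,0),(0,0),(0,0),(0,0),(0,0),(0,0),(1,2),(0,0),(0,0)],
  [(0,0),(0,0),(0,0),(0,0),(0,0),(0,0),(0,0),(0,0),(0,0),(0,0),(0,0),(0,0),(1,0),(0,0)],
  [(0,0),(0,0),(0,0),(0,0),(0,0),(0,0),(0,0),(0,0),(0,0),(0,0),(0,0),(0,0),(0,0),(1,0)]]"

lemma Lbig_gens_dims: "Lbig_gens \<noteq> []" "\<forall>r\<in>set Lbig_gens. length r = 14"
  by (simp_all add: Lbig_gens_def)

lemma E8cubeH_gens_dims: "E8cubeH_gens \<noteq> []" "\<forall>r\<in>set E8cubeH_gens. length r = 14"
  by (simp_all add: E8cubeH_gens_def)

lemma Lbig_gens_combination: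
  assumes "(\<Sum>i<12. z i) = of_int m + theta * e"
  shows "vecmat (of_int m # map (of_int \<circ> a) [0..<6] @ e # map z [1..<12] @ [h0, h1]) (mat_of_zw Lbig_gens)
    = map (\<lambda>i. of_int m + theta * of_int (golay_word a i) + 3 * z i) [0..<12] @ [h0, h1]"
  (is "vecmat ?x ?M = ?v")
proof (rule nth_equalityI)
  show "length (vecmat ?x ?M) = length ?v"
    by (simp add: Lbig_gens_def)
  have z0: "z 0 = of_int m + theta * e
      - (z 1 + z 2 + z 3 + z 4 + z 5 + z 6 + z 7 + z 8 + z 9 + z 10 + z 11)"
    using assms by (simp add: sum_lessThan_12 algebra_simps)
  fix j assume "j < length (vecmat ?x ?M)"
  then have "j < 14"
    by (simp add: Lbig_gens_def)
  then show "vecmat ?x ?M ! j = ?v ! j"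
    unfolding less_14_cases
    by (elim disjE) (simp_all add: nth_append nth_vecmat Lbig_gens_def z0 of_zw_def golay_word_def
        sum_lessThan_6 golayG_eq theta_eq eval_nat_numeral upt_rec algebra_simps)
qed

lemma Lbig_spanned:
  assumes "v \<in> Lbig"
  shows "\<exists>x. length x = length Lbig_gens \<and> set x \<subseteq> Eis \<and> v = vecmat x (mat_of_zw Lbig_gens)"
proof -
  obtain u h where v: "v = u @ h" and u: "u \<in> Leech" and h: "h \<in> Evecs 2"
    using assms unfolding Lbig_def Hplane_def by blast
  obtain h0 h1 where h_eq: "h = [h0, h1]" and h01: "h0 \<in> Eis" "h1 \<in> Eis"
    using h by (auto simp: Evecs_def numeral_2_eq_2 length_Suc_conv)
  obtain m a z where "length u = 12" and coords: "leech_coords u m a z"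
    using u unfolding Leech_iff by blast
  then have u_eq: "u = map (\<lambda>i. of_int m + theta * of_int (golay_word a i) + 3 * z i) [0..<12]"
    by (intro nth_equalityI) (auto simp: leech_coords_def)
  obtain e where e: "e \<in> Eis" "(\<Sum>i<12. z i) - of_int m = theta * e"
    using coords unfolding leech_coords_def cong_theta_def by blast
  then have sum_z: "(\<Sum>i<12. z i) = of_int m + theta * e"
    by (metis add.commute diff_eq_eq)
  let ?x = "of_int m # map (of_int \<circ> a) [0..<6] @ e # map z [1..<12] @ [h0, h1]"
  have "length ?x = length Lbig_gens"
    by (simp add: Lbig_gens_def)
  moreover have "set ?x \<subseteq> Eis"
    using coords e(1) h01 by (auto simp: leech_coords_def)
  moreover have "v = vecmat ?x (mat_of_zw Lbig_gens)"
    by (simp only: v u_eq h_eq Lbig_gens_combination[OF sum_z])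
  ultimately show ?thesis
    by blast
qed

lemma E8cubeH_gens_combination:
  "vecmat (of_int \<alpha>0 # of_int \<beta>0 # map E0 [0..<4] @ of_int \<alpha>4 # of_int \<beta>4 # map E4 [0..<4]
      @ of_int \<alpha>8 # of_int \<beta>8 # map E8 [0..<4] @ [h0, h1]) (mat_of_zw E8cubeH_gens)
    = E8_vec \<alpha>0 \<beta>0 E0 @ E8_vec \<alpha>4 \<beta>4 E4 @ E8_vec \<alpha>8 \<beta>8 E8 @ [h0, h1]"
  (is "vecmat ?x ?M = ?v")
proof (rule nth_equalityI)
  show "length (vecmat ?x ?M) = length ?v"
    by (simp add: E8cubeH_gens_def E8_vec_def)
  fix j assume "j < length (vecmat ?x ?M)"
  then have "j < 14"
    by (simp add: E8cubeH_gens_def)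
  then show "vecmat ?x ?M ! j = ?v ! j"
    unfolding less_14_cases
    by (elim disjE) (simp_all add: nth_append nth_vecmat E8cubeH_gens_def E8_vec_def of_zw_def
        tetra_word_def theta_eq eval_nat_numeral upt_rec algebra_simps)
qed

lemma E8cubeH_spanned:
  assumes "v \<in> E8cubeH"
  shows "\<exists>x. length x = length E8cubeH_gens \<and> set x \<subseteq> Eis \<and> v = vecmat x (mat_of_zw E8cubeH_gens)"
proof -
  obtain b0 b4 b8 h where v: "v = b0 @ b4 @ b8 @ h" and b: "b0 \<in> E8E" "b4 \<in> E8E" "b8 \<in> E8E"
    and h: "h \<in> Evecs 2"
    using assms unfolding E8cubeH_def Hplane_def by blast
  obtain h0 h1 where h_eq: "h = [h0, h1]" and h01: "h0 \<in> Eis" "h1 \<in> Eis"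
    using h by (auto simp: Evecs_def numeral_2_eq_2 length_Suc_conv)
  obtain \<alpha>0 \<beta>0 E0 where E0: "\<forall>i<4. E0 i \<in> Eis" "b0 = E8_vec \<alpha>0 \<beta>0 E0"
    using b(1) by (rule E8E_coords)
  obtain \<alpha>4 \<beta>4 E4 where E4: "\<forall>i<4. E4 i \<in> Eis" "b4 = E8_vec \<alpha>4 \<beta>4 E4"
    using b(2) by (rule E8E_coords)
  obtain \<alpha>8 \<beta>8 E8 where E8: "\<forall>i<4. E8 i \<in> Eis" "b8 = E8_vec \<alpha>8 \<beta>8 E8"
    using b(3) by (rule E8E_coords)
  let ?x = "of_int \<alpha>0 # of_int \<beta>0 # map E0 [0..<4] @ of_int \<alpha>4 # of_int \<beta>4 # map E4 [0..<4]
      @ of_int \<alpha>8 # of_int \<beta>8 # map E8 [0..<4] @ [h0, h1]"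
  have "length ?x = length E8cubeH_gens"
    by (simp add: E8cubeH_gens_def)
  moreover have "set ?x \<subseteq> Eis"
    using E0(1) E4(1) E8(1) h01 by auto
  moreover have "v = vecmat ?x (mat_of_zw E8cubeH_gens)"
    by (simp only: v h_eq E0(2) E4(2) E8(2) E8cubeH_gens_combination)
  ultimately show ?thesis
    by blast
qed

definition scaled_image_test :: "int \<Rightarrow> zw list list \<Rightarrow> (zw list \<Rightarrow> bool) \<Rightarrow> zw list \<Rightarrow> bool" where
  "scaled_image_test k M test r \<longleftrightarrow>
     (let w = zw_vecmat r M in list_all (\<lambda>p. k dvd fst p \<and> k dvd snd p) w \<and> test (map (zw_div k) w))"

lemma scaled_image_test_imp:
  assumes "scaled_image_test k M test r" and sound: "\<And>w. test w \<Longrightarrow> map of_zw w \<in> T"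
    and "k \<noteq> 0" "M \<noteq> []" "length r = length M" "\<forall>s\<in>set M. length s = n"
  shows "lin_map (1 / of_int k) (mat_of_zw M) (map of_zw r) \<in> T"
proof -
  have dvd: "list_all (\<lambda>p. k dvd fst p \<and> k dvd snd p) (zw_vecmat r M)"
    and test: "test (map (zw_div k) (zw_vecmat r M))"
    using assms(1) by (simp_all add: scaled_image_test_def Let_def)
  show ?thesis
    unfolding lin_map_of_zw_div[OF assms(3-6) dvd] by (rule sound[OF test])
qed

lemma lin_map_image_subset:
  assumes T: "Eis_submodule n T"
    and spanned: "\<And>v. v \<in> S \<Longrightarrow> \<exists>x. length x = length Gs \<and> set x \<subseteq> Eis \<and> v = vecmat x (mat_of_zw Gs)"
    and Gs: "Gs \<noteq> []" "\<forall>r\<in>set Gs. length r = length M" and "M \<noteq> []"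
    and gens: "\<And>r. r \<in> set Gs \<Longrightarrow> lin_map c (mat_of_zw M) (map of_zw r) \<in> T"
  shows "lin_map c (mat_of_zw M) ` S \<subseteq> T"
proof
  fix w assume "w \<in> lin_map c (mat_of_zw M) ` S"
  then obtain v x where "v \<in> S" "w = lin_map c (mat_of_zw M) v"
    and x: "length x = length Gs" "set x \<subseteq> Eis" "v = vecmat x (mat_of_zw Gs)"
    using spanned by blast
  then have "w = vecmat x (map (lin_map c (mat_of_zw M)) (mat_of_zw Gs))"
    using Gs \<open>M \<noteq> []\<close> by (simp add: lin_map_vecmat)
  also have "\<dots> \<in> T"
    using T Gs gens x by (intro vecmat_in_submodule) auto
  finally show "w \<in> T" .
qed

section \<open>The isometry\<close>

definition isoF :: "zw list list" where
  "isoF = [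
  [(138,132),(-43,-59),(89,58),(-130,-74),(266,43),(-147,-126),(116,-56),(-11,125),(-87,-297),(109,263),(-14,-55),(-161,-124),(-441,-306),(57,-192)],
  [(-12,-15),(2,4),(-7,-8),(11,10),(-25,-11),(12,15),(-13,1),(4,-10),(-3,24),(-5,-22),(-2,2),(13,14),(36,36),(-12,12)],
  [(0,9),(2,-2),(2,4),(-4,-8),(14,16),(0,-9),(11,7),(-8,-1),(15,-3),(-11,5),(4,-1),(-5,-10),(-6,-27),(15,3)],
  [(3,-24),(-4,7),(-4,-17),(11,28),(-37,-50),(0,27),(-31,-23),(25,2),(-42,12),(34,-16),(-8,2),(4,29),(18,81),(-48,-15)],
  [(15,0),(-4,-2),(8,-2),(-10,4),(5,-23),(-15,0),(-1,-17),(10,14),(-30,-24),(28,20),(-5,-4),(-14,2),(-36,9),(-18,-27)],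
  [(0,-24),(-4,7),(-7,-17),(5,19),(-34,-44),(0,24),(-28,-20),(22,2),(-36,12),(28,-16),(-8,2),(4,26),(18,72),(-42,-12)],
  [(-24,0),(8,4),(-10,4),(14,-8),(-10,37),(21,-3),(11,31),(-20,-22),(48,36),(-44,-28),(10,8),(22,-4),(54,-21),(30,42)],
  [(9,0),(-4,-2),(2,-2),(-4,4),(2,-14),(-9,0),(-4,-11),(7,8),(-21,-12),(16,8),(-2,-1),(-8,5),(-18,12),(-12,-15)],
  [(0,-21),(-4,4),(-4,-11),(8,19),(-31,-38),(3,21),(-22,-17),(22,2),(-30,12),(22,-16),(-8,2),(4,23),(18,63),(-36,-9)],
  [(0,12),(2,-2),(2,7),(-4,-11),(20,28),(0,-15),(17,13),(-14,-1),(24,-6),(-20,8),(4,-1),(-2,-16),(-9,-42),(27,9)],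
  [(-12,-15),(2,4),(-7,-8),(11,10),(-25,-14),(9,12),(-13,1),(7,-7),(0,24),(-2,-22),(1,5),(13,14),(33,36),(-12,12)],
  [(9,0),(-4,-2),(2,-2),(-4,4),(2,-14),(-9,0),(-4,-11),(7,8),(-18,-12),(13,8),(-2,-1),(-8,-1),(-18,6),(-12,-15)],
  [(-315,-135),(117,81),(-171,-27),(234,9),(-342,234),(324,117),(-54,279),(-144,-306),(468,585),(-450,-477),(90,117),(333,90),(864,162),(180,522)],
  [(-162,135),(90,-18),(-45,117),(45,-189),(144,522),(144,-153),(225,324),(-279,-180),(567,189),(-477,-99),(108,45),(126,-189),(270,-567),(468,369)]]"

definition isoG :: "zw list list" where
  "isoG = [
  [(6,-132),(3,15),(-9,-9),(27,24),(15,0),(24,24),(-24,0),(9,0),(21,21),(-12,-12),(3,15),(9,0),(-3,-51),(50,55)],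
  [(16,59),(-2,-4),(4,2),(-11,-7),(-2,2),(-11,-7),(4,-4),(-2,2),(-8,-4),(4,2),(-2,-4),(-2,2),(8,22),(-22,-17)],
  [(31,-58),(1,8),(-2,-4),(13,17),(10,2),(10,17),(-14,-4),(4,2),(7,11),(-5,-7),(1,8),(4,2),(8,-23),(22,35)],
  [(-56,74),(1,-10),(4,8),(-17,-28),(-14,-4),(-14,-19),(22,8),(-8,-4),(-11,-19),(7,11),(1,-10),(-8,-4),(-16,31),(-27,-51)],
  [(223,-43),(-14,11),(-2,-16),(13,50),(28,23),(10,44),(-47,-37),(16,14),(7,38),(-8,-28),(-11,14),(16,14),(74,-26),(12,102)],
  [(-21,126),(-3,-15),(9,9),(-27,-27),(-15,0),(-24,-24),(24,3),(-9,0),(-18,-21),(15,15),(-3,-12),(-9,0),(-1,49),(-49,-59)],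
  [(172,56),(-14,-1),(4,-7),(-8,23),(16,17),(-8,20),(-20,-31),(7,11),(-5,17),(4,-13),(-14,-1),(7,11),(61,14),(-25,43)],
  [(-136,-125),(14,10),(-7,1),(23,-2),(-4,-14),(20,-2),(2,22),(-1,-8),(20,-2),(-13,1),(14,7),(-1,-8),(-51,-42),(50,-2)],
  [(210,297),(-27,-24),(18,3),(-54,-12),(-6,24),(-48,-12),(12,-36),(-9,12),(-42,-12),(30,6),(-24,-24),(-6,12),(84,105),(-117,-39)],
  [(-154,-263),(17,22),(-16,-5),(50,16),(8,-20),(44,16),(-16,28),(8,-8),(38,16),(-28,-8),(20,22),(5,-8),(-64,-95),(103,47)],
  [(41,55),(-4,-2),(5,1),(-10,-2),(-1,4),(-10,-2),(2,-8),(-1,1),(-10,-2),(5,1),(-4,-5),(-1,1),(17,19),(-23,-7)],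
  [(-37,124),(-1,-14),(5,10),(-25,-29),(-16,-2),(-22,-26),(26,4),(-13,-5),(-19,-23),(14,16),(-1,-14),(-7,1),(-7,49),(-47,-64)],
  [(135,-306),(0,36),(-18,-27),(63,81),(45,9),(54,72),(-72,-18),(27,9),(45,63),(-36,-45),(0,36),(27,9),(33,-123),(114,174)],
  [(-747,-576),(72,36),(-33,15),(99,-45),(-27,-81),(90,-36),(33,129),(-6,-48),(81,-27),(-51,24),(69,30),(-12,-42),(-279,-189),(234,-54)]]"

lemma isoF_dims: "isoF \<noteq> []" "length isoF = 14" "\<forall>r\<in>set isoF. length r = 14"
  by (simp_all add: isoF_def)

lemma isoG_dims: "isoG \<noteq> []" "length isoG = 14" "\<forall>r\<in>set isoG. length r = 14"
  by (simp_all add: isoG_def)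

definition zw_gram :: "int \<Rightarrow> int \<Rightarrow> zw list list \<Rightarrow> zw list list" where
  "zw_gram c s M = map (\<lambda>x. map (zw_block_form c s x) M) M"

lemma isoF_times_isoG: "map (\<lambda>r. zw_vecmat r isoG) isoF = scalar_mat 14 (27, 0)"
  by code_simp

lemma isoG_times_isoF: "map (\<lambda>r. zw_vecmat r isoF) isoG = scalar_mat 14 (27, 0)"
  by code_simp

text \<open>The factor \<open>81 = 9\<^sup>2\<close> compensates the \<open>1 / 9\<close> in \<open>lattice_iso\<close>, and \<open>-27 = 81 \<cdot> (-1/3)\<close>.\<close>

lemma zw_gram_isoF: "zw_gram (-1) 1 isoF = zw_gram (-27) 81 (scalar_mat 14 (1, 0))"
  by code_simp

lemma isoF_maps_Lbig_gens: "list_all (scaled_image_test 9 isoF E8cubeH_test) Lbig_gens"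
  by code_simp

lemma isoG_maps_E8cubeH_gens: "list_all (scaled_image_test 3 isoG Lbig_test) E8cubeH_gens"
  by code_simp

definition lattice_iso :: "complex list \<Rightarrow> complex list" where
  "lattice_iso = lin_map (1 / 9) (mat_of_zw isoF)"

definition lattice_iso_inv :: "complex list \<Rightarrow> complex list" where
  "lattice_iso_inv = lin_map (1 / 3) (mat_of_zw isoG)"

lemma length_lattice_iso: "length (lattice_iso v) = 14"
  by (simp add: lattice_iso_def lin_map_def vscale_def isoF_def)

lemma lattice_iso_inv_iso: "length v = 14 \<Longrightarrow> lattice_iso_inv (lattice_iso v) = v"
  unfolding lattice_iso_def lattice_iso_inv_def
  by (rule lin_map_mat_of_zw_inverse[OF isoF_times_isoG]) (use isoF_dims isoG_dims in \<open>auto simp: isoF_def\<close>)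

lemma lattice_iso_iso_inv: "length v = 14 \<Longrightarrow> lattice_iso (lattice_iso_inv v) = v"
  unfolding lattice_iso_def lattice_iso_inv_def
  by (rule lin_map_mat_of_zw_inverse[OF isoG_times_isoF]) (use isoF_dims isoG_dims in \<open>auto simp: isoG_def\<close>)

lemma lattice_iso_Lbig: "lattice_iso ` Lbig \<subseteq> E8cubeH"
  unfolding lattice_iso_def
proof (rule lin_map_image_subset[OF Eis_submodule_E8cubeH Lbig_spanned])
  fix r assume r: "r \<in> set Lbig_gens"
  then have "scaled_image_test 9 isoF E8cubeH_test r"
    using isoF_maps_Lbig_gens by (simp add: list_all_iff)
  from scaled_image_test_imp[where n = 14, OF this E8cubeH_test_imp_E8cubeH]
  show "lin_map (1 / 9) (mat_of_zw isoF) (map of_zw r) \<in> E8cubeH"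
    using isoF_dims Lbig_gens_dims r by simp
qed (use isoF_dims Lbig_gens_dims in auto)

lemma lattice_iso_inv_E8cubeH: "lattice_iso_inv ` E8cubeH \<subseteq> Lbig"
  unfolding lattice_iso_inv_def
proof (rule lin_map_image_subset[OF Eis_submodule_Lbig E8cubeH_spanned])
  fix r assume r: "r \<in> set E8cubeH_gens"
  then have "scaled_image_test 3 isoG Lbig_test r"
    using isoG_maps_E8cubeH_gens by (simp add: list_all_iff)
  from scaled_image_test_imp[where n = 14, OF this Lbig_test_imp_Lbig]
  show "lin_map (1 / 3) (mat_of_zw isoG) (map of_zw r) \<in> Lbig"
    using isoG_dims E8cubeH_gens_dims r by simp
qed (use isoG_dims E8cubeH_gens_dims in auto)

lemma block_form_isoF_rows:
  assumes "k < 14" "l < 14"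
  shows "block_form (- 1) 1 (map of_zw (isoF ! k)) (map of_zw (isoF ! l))
    = 81 * block_form (- 1 / 3) 1 (scalar_mat 14 1 ! k) (scalar_mat 14 1 ! l)"
proof -
  let ?I = "scalar_mat 14 (1::int, 0::int)"
  have I: "map of_zw (?I ! i) = scalar_mat 14 1 ! i" "length (?I ! i) = 14" if "i < 14" for i
    using that by (simp_all add: scalar_mat_def)
  have "block_form (- 1) 1 (map of_zw (isoF ! k)) (map of_zw (isoF ! l))
      = of_zw (zw_block_form (- 1) 1 (isoF ! k) (isoF ! l))"
    using assms isoF_dims by (simp add: of_zw_zw_block_form)
  also have "zw_block_form (- 1) 1 (isoF ! k) (isoF ! l) = zw_block_form (- 27) 81 (?I ! k) (?I ! l)"
    using arg_cong[OF zw_gram_isoF, of "\<lambda>G. G ! k ! l"] assms isoF_dims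
    by (simp add: zw_gram_def scalar_mat_def)
  also have "of_zw \<dots> = block_form (- 27) 81 (scalar_mat 14 1 ! k) (scalar_mat 14 1 ! l)"
    using assms by (simp add: of_zw_zw_block_form I)
  also have "\<dots> = 81 * block_form (- 1 / 3) 1 (scalar_mat 14 1 ! k) (scalar_mat 14 1 ! l)"
    using block_form_scale[of 81 "- 1 / 3" 1] by simp
  finally show ?thesis .
qed

lemma lattice_iso_preserves_form:
  assumes "length u = 14" "length v = 14"
  shows "E8cubeH_form (lattice_iso u) (lattice_iso v) = Lbig_form u v"
proof -
  let ?F = "mat_of_zw isoF" and ?I = "scalar_mat 14 (1::complex)"
  have F: "?F \<noteq> []" "\<forall>r\<in>set ?F. length r = 14" "length ?F = 14"
    using isoF_dims by auto
  have I: "?I \<noteq> []" "\<forall>r\<in>set ?I. length r = 14" "length ?I = 14"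
    by (auto simp: scalar_mat_def)
  have "E8cubeH_form (lattice_iso u) (lattice_iso v) = block_form (- 1) 1 (lattice_iso u) (lattice_iso v)"
    by (simp add: E8cubeH_form_eq length_lattice_iso)
  also have "\<dots> = 1 / 81 * block_form (- 1) 1 (vecmat u ?F) (vecmat v ?F)"
  proof -
    have "length (vecmat w ?F) = 14" for w
      by (simp add: isoF_def)
    then show ?thesis
      by (simp add: lattice_iso_def lin_map_def block_form_vscale)
  qed
  also have "\<dots> = (\<Sum>k<14. \<Sum>l<14. cnj (u ! k) * v ! l * block_form (- 1 / 3) 1 (?I ! k) (?I ! l))"
    using F by (simp add: block_form_vecmat block_form_isoF_rows sum_divide_distrib mult.assoc)
  also have "\<dots> = block_form (- 1 / 3) 1 (vecmat u ?I) (vecmat v ?I)"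
    using I by (simp add: block_form_vecmat)
  also have "\<dots> = Lbig_form u v"
    using assms by (simp add: vecmat_scalar_mat vscale_def map_idI Lbig_form_eq)
  finally show ?thesis .
qed

theorem mainTheorem3:
  shows "isometric Lbig Lbig_form E8cubeH E8cubeH_form"
  unfolding isometric_def
proof (intro exI[of _ lattice_iso] conjI ballI)
  show "bij_betw lattice_iso Lbig E8cubeH"
    using lattice_iso_inv_iso lattice_iso_iso_inv lattice_iso_Lbig lattice_iso_inv_E8cubeH Lbig_length E8cubeH_length
    by (intro bij_betw_byWitness[where f' = lattice_iso_inv]) auto
  show "lattice_iso (vadd (vscale a u) (vscale b v)) = vadd (vscale a (lattice_iso u)) (vscale b (lattice_iso v))"
    if "u \<in> Lbig" "v \<in> Lbig" "a \<in> Eis" "b \<in> Eis" for u v a b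
    using that isoF_dims by (simp add: lattice_iso_def lin_map_linear Lbig_length)
  show "E8cubeH_form (lattice_iso u) (lattice_iso v) = Lbig_form u v" if "u \<in> Lbig" "v \<in> Lbig" for u v
    using that by (simp add: lattice_iso_preserves_form Lbig_length)
qed

end
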